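(* Let $\pi$ be a projective unitary representation of a countable group $G$ on a Hilbert space $H$ such that the set $\mathcal{B}_\pi$ of Bessel vectors of $\pi$ is dense in $H$ and $\pi$ admits a Riesz sequence vector. Suppose $\xi\in H$ is such that $\mathrm{range}(\Theta_{\xi,\pi})$ is not dense in $\ell^2(G)$. Then there exists a nonzero vector $x\in H$ such that $\mathrm{range}(\Theta_{x,\pi})$ and $\mathrm{range}(\Theta_{\xi,\pi})$ are orthogonal.
   Context: A projective unitary representation of $G$ on $H$ is a map $g\mapsto\pi(g)$ into unitaries with $\pi(g)\pi(h)=\mu(g,h)\pi(gh)$, $\mu:G\times G\to\mathbb{T}$. $\xi$ is a Bessel vector (resp. Riesz sequence vector) for $\pi$ if $\{\pi(g)\xi\}_{g\in G}$ is a Bessel sequence (resp. a Riesz basis for its closed span). The analysis operator $\Theta_{x,\pi}(y)=\sum_{g\in G}\langle y,\pi(g)x\rangle\chi_g$ ($\{\chi_g\}$ the standard basis of $\ell^2(G)$) is defined on $\{y\in H:\sum_g|\langle y,\pi(g)x\rangle|^2<\infty\}$. *)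

theory Defs
  imports "HOL-Analysis.Analysis" "HOL-Algebra.Group"
begin

class complex_vector = real_vector +
  fixes scaleC :: "complex \<Rightarrow> 'a \<Rightarrow> 'a" (infixr "*\<^sub>C" 75)
  assumes scaleC_add_right: "a *\<^sub>C (x + y) = a *\<^sub>C x + a *\<^sub>C y"
    and scaleC_add_left: "(a + b) *\<^sub>C x = a *\<^sub>C x + b *\<^sub>C x"
    and scaleC_scaleC: "a *\<^sub>C (b *\<^sub>C x) = (a * b) *\<^sub>C x"
    and scaleC_one: "1 *\<^sub>C x = x"
    and scaleR_scaleC: "scaleR r x = complex_of_real r *\<^sub>C x"

class complex_inner = complex_vector + real_normed_vector +
  fixes cinner :: "'a \<Rightarrow> 'a \<Rightarrow> complex"
  assumes cinner_commute: "cinner x y = cnj (cinner y x)"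
    and cinner_add_left: "cinner (x + y) z = cinner x z + cinner y z"
    and cinner_scaleC_left: "cinner (r *\<^sub>C x) y = r * cinner x y"
    and cinner_ge_zero: "0 \<le> Re (cinner x x)"
    and cinner_eq_zero_iff: "cinner x x = 0 \<longleftrightarrow> x = 0"
    and norm_eq_sqrt_cinner: "norm x = sqrt (Re (cinner x x))"

text \<open>A complex Hilbert space is a type of sort {complex_inner, complete_space}.
  The inner product is linear in the first argument.\<close>

definition cunitary :: "('h::complex_inner \<Rightarrow> 'h) \<Rightarrow> bool" where
  "cunitary U \<longleftrightarrow> (\<forall>x y. U (x + y) = U x + U y) \<and> (\<forall>c x. U (c *\<^sub>C x) = c *\<^sub>C U x)
     \<and> (\<forall>x y. cinner (U x) (U y) = cinner x y) \<and> surj U"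

definition proj_unitary_rep :: "('g, 'b) monoid_scheme \<Rightarrow> ('g \<Rightarrow> 'h::complex_inner \<Rightarrow> 'h) \<Rightarrow> bool" where
  "proj_unitary_rep G \<pi> \<longleftrightarrow> (\<forall>g\<in>carrier G. cunitary (\<pi> g)) \<and>
     (\<exists>\<mu> :: 'g \<Rightarrow> 'g \<Rightarrow> complex. \<forall>g\<in>carrier G. \<forall>h\<in>carrier G.
        cmod (\<mu> g h) = 1 \<and> (\<forall>x. \<pi> g (\<pi> h x) = \<mu> g h *\<^sub>C \<pi> (g \<otimes>\<^bsub>G\<^esub> h) x))"

definition bessel_vector :: "('g, 'b) monoid_scheme \<Rightarrow> ('g \<Rightarrow> 'h::complex_inner \<Rightarrow> 'h) \<Rightarrow> 'h \<Rightarrow> bool" where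
  "bessel_vector G \<pi> \<xi> \<longleftrightarrow> (\<exists>B. \<forall>y.
      (\<lambda>g. (cmod (cinner y (\<pi> g \<xi>)))\<^sup>2) summable_on carrier G \<and>
      (\<Sum>\<^sub>\<infinity>g\<in>carrier G. (cmod (cinner y (\<pi> g \<xi>)))\<^sup>2) \<le> B * (norm y)\<^sup>2)"

text \<open>Riesz sequence (= Riesz basis for its closed span), via the standard frame-type inequalities
  on finitely supported coefficient families.\<close>
definition riesz_vector :: "('g, 'b) monoid_scheme \<Rightarrow> ('g \<Rightarrow> 'h::complex_inner \<Rightarrow> 'h) \<Rightarrow> 'h \<Rightarrow> bool" where
  "riesz_vector G \<pi> \<xi> \<longleftrightarrow> (\<exists>A B. 0 < A \<and> 0 < B \<and>
     (\<forall>(c :: 'g \<Rightarrow> complex) F. finite F \<and> F \<subseteq> carrier G \<longrightarrow>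
        A * (\<Sum>g\<in>F. (cmod (c g))\<^sup>2) \<le> (norm (\<Sum>g\<in>F. c g *\<^sub>C \<pi> g \<xi>))\<^sup>2 \<and>
        (norm (\<Sum>g\<in>F. c g *\<^sub>C \<pi> g \<xi>))\<^sup>2 \<le> B * (\<Sum>g\<in>F. (cmod (c g))\<^sup>2)))"

definition l2 :: "('g, 'b) monoid_scheme \<Rightarrow> ('g \<Rightarrow> complex) set" where
  "l2 G = {f. (\<forall>g. g \<notin> carrier G \<longrightarrow> f g = 0) \<and> (\<lambda>g. (cmod (f g))\<^sup>2) summable_on carrier G}"

definition l2_inner :: "('g, 'b) monoid_scheme \<Rightarrow> ('g \<Rightarrow> complex) \<Rightarrow> ('g \<Rightarrow> complex) \<Rightarrow> complex" where
  "l2_inner G f h = (\<Sum>\<^sub>\<infinity>g\<in>carrier G. f g * cnj (h g))"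

definition l2_norm :: "('g, 'b) monoid_scheme \<Rightarrow> ('g \<Rightarrow> complex) \<Rightarrow> real" where
  "l2_norm G f = sqrt (\<Sum>\<^sub>\<infinity>g\<in>carrier G. (cmod (f g))\<^sup>2)"

definition l2_dense :: "('g, 'b) monoid_scheme \<Rightarrow> ('g \<Rightarrow> complex) set \<Rightarrow> bool" where
  "l2_dense G S \<longleftrightarrow> (\<forall>f\<in>l2 G. \<forall>\<epsilon>>0. \<exists>s\<in>S. l2_norm G (\<lambda>g. f g - s g) < \<epsilon>)"

definition analysis_domain :: "('g, 'b) monoid_scheme \<Rightarrow> ('g \<Rightarrow> 'h::complex_inner \<Rightarrow> 'h) \<Rightarrow> 'h \<Rightarrow> 'h set" where
  "analysis_domain G \<pi> x = {y. (\<lambda>g. (cmod (cinner y (\<pi> g x)))\<^sup>2) summable_on carrier G}"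

definition analysis_op :: "('g, 'b) monoid_scheme \<Rightarrow> ('g \<Rightarrow> 'h::complex_inner \<Rightarrow> 'h) \<Rightarrow> 'h \<Rightarrow> 'h \<Rightarrow> ('g \<Rightarrow> complex)" where
  "analysis_op G \<pi> x y = (\<lambda>g. if g \<in> carrier G then cinner y (\<pi> g x) else 0)"

definition analysis_range :: "('g, 'b) monoid_scheme \<Rightarrow> ('g \<Rightarrow> 'h::complex_inner \<Rightarrow> 'h) \<Rightarrow> 'h \<Rightarrow> ('g \<Rightarrow> complex) set" where
  "analysis_range G \<pi> x = analysis_op G \<pi> x ` analysis_domain G \<pi> x"

end

theory Submission
  imports Defs
begin

text \<open>
  Let \<open>M = range \<Theta>\<^sub>\<xi>\<close>. Since \<open>\<pi>\<close> is a projective representation, \<open>M\<close> is invariant under the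
  \<open>\<mu>\<close>-twisted left translations \<open>\<lambda>\<^sub>h\<close> of \<open>\<ell>\<^sup>2(G)\<close> and their adjoints; hence so is
  \<open>N = M\<^sup>\<perp>\<close>, and the orthogonal projection \<open>P\<close> onto \<open>N\<close> commutes with every \<open>\<lambda>\<^sub>h\<close>.
  Such a projection is a twisted convolution: \<open>(P a)(g) = \<mu>(g,1) \<langle>a, \<lambda>\<^sub>g p\<rangle>\<close> with
  \<open>p = P \<delta>\<^sub>1\<close>, and \<open>p \<noteq> 0\<close> because non-density of \<open>M\<close> makes \<open>N \<noteq> 0\<close>.
  Synthesising \<open>x = \<Sum>\<^sub>k p(k) \<pi>(k) \<eta>\<close> from a Riesz vector \<open>\<eta>\<close> gives \<open>x \<noteq> 0\<close> and
  \<open>\<Theta>\<^sub>x y = cnj \<mu>(1,1) P(\<Theta>\<^sub>\<eta> y) \<in> N\<close> for all \<open>y\<close>, so \<open>range \<Theta>\<^sub>x \<perp> range \<Theta>\<^sub>\<xi>\<close>.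

  A Riesz vector is itself a Bessel vector.
\<close>

section \<open>Complex inner product spaces\<close>

lemma additive_scaleC_left: "Modules.additive (\<lambda>c. c *\<^sub>C (x::'a::complex_vector))"
  by standard (rule scaleC_add_left)

lemma additive_cinner_left: "Modules.additive (\<lambda>x::'a::complex_inner. cinner x y)"
  by standard (rule cinner_add_left)

lemma cinner_add_right: "cinner x (y + z) = cinner x y + cinner (x::'a::complex_inner) z"
  by (subst (1 2 3) cinner_commute) (simp add: cinner_add_left)

lemma additive_cinner_right: "Modules.additive (\<lambda>y::'a::complex_inner. cinner x y)"
  by standard (rule cinner_add_right)

lemma scaleC_zero_left [simp]: "0 *\<^sub>C (x::'a::complex_vector) = 0"
  by (rule Modules.additive.zero[OF additive_scaleC_left])

lemma scaleC_diff_left: "(a - b) *\<^sub>C (x::'a::complex_vector) = a *\<^sub>C x - b *\<^sub>C x"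
  by (rule Modules.additive.diff[OF additive_scaleC_left])

lemma cinner_zero_left [simp]: "cinner 0 (y::'a::complex_inner) = 0"
  by (rule Modules.additive.zero[OF additive_cinner_left])

lemma cinner_diff_left: "cinner (x - y) (z::'a::complex_inner) = cinner x z - cinner y z"
  by (rule Modules.additive.diff[OF additive_cinner_left])

lemma cinner_zero_right [simp]: "cinner (x::'a::complex_inner) 0 = 0"
  by (rule Modules.additive.zero[OF additive_cinner_right])

lemma cinner_diff_right: "cinner (x::'a::complex_inner) (y - z) = cinner x y - cinner x z"
  by (rule Modules.additive.diff[OF additive_cinner_right])

lemma cinner_sum_right: "cinner (x::'a::complex_inner) (sum f A) = (\<Sum>a\<in>A. cinner x (f a))"
  by (rule Modules.additive.sum[OF additive_cinner_right])

lemma cinner_scaleC_right: "cinner x (c *\<^sub>C y) = cnj c * cinner (x::'a::complex_inner) y"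
  by (subst (1 2) cinner_commute) (simp add: cinner_scaleC_left)

lemma cinner_self: "cinner x x = complex_of_real ((norm (x::'a::complex_inner))\<^sup>2)"
proof -
  have "Im (cinner x x) = 0"
    using cinner_commute[of x x] by (metis Reals_cnj_iff complex_is_Real_iff)
  moreover have "Re (cinner x x) = (norm x)\<^sup>2"
    using norm_eq_sqrt_cinner[of x] cinner_ge_zero[of x] by simp
  ultimately show ?thesis by (simp add: complex_eq_iff)
qed

lemma norm_scaleC: "norm (c *\<^sub>C x) = cmod c * norm (x::'a::complex_inner)"
proof -
  have "complex_of_real ((norm (c *\<^sub>C x))\<^sup>2) = (c * cnj c) * cinner x x"
    by (simp only: cinner_self[symmetric] cinner_scaleC_left cinner_scaleC_right mult_ac)
  also have "\<dots> = complex_of_real ((cmod c * norm x)\<^sup>2)"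
    by (simp only: complex_norm_square[symmetric] cinner_self of_real_mult[symmetric] power_mult_distrib)
  finally show ?thesis
    by (simp only: of_real_eq_iff power2_eq_iff_nonneg norm_ge_zero mult_nonneg_nonneg)
qed

lemma scaleC_eq_0_iff: "c *\<^sub>C x = 0 \<longleftrightarrow> c = 0 \<or> (x::'a::complex_inner) = 0"
  by (metis norm_eq_zero norm_scaleC mult_eq_0_iff scaleC_zero_left)

lemma cauchy_schwarz_from_quadratic:
  fixes a d :: real and b :: complex
  assumes "d > 0" and "\<And>t. 0 \<le> a - 2 * Re (cnj t * b) + (cmod t)\<^sup>2 * d"
  shows "(cmod b)\<^sup>2 \<le> a * d"
proof -
  have "0 \<le> a - 2 * Re (cnj (b / d) * b) + (cmod (b / d))\<^sup>2 * d" by (rule assms(2))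
  also have "cnj (b / d) * b = complex_of_real ((cmod b)\<^sup>2 / d)"
    by (simp add: complex_norm_square[symmetric] mult.commute)
  also have "(cmod (b / d))\<^sup>2 * d = (cmod b)\<^sup>2 / d"
    using assms(1) by (simp add: norm_divide power2_eq_square)
  finally show ?thesis using assms(1) by (simp add: field_simps)
qed

lemma cauchy_schwarz_cinner: "cmod (cinner x y) \<le> norm x * norm (y::'a::complex_inner)"
proof (cases "y = 0")
  case False
  have "(cmod (cinner x y))\<^sup>2 \<le> (norm x)\<^sup>2 * (norm y)\<^sup>2"
  proof (rule cauchy_schwarz_from_quadratic)
    show "0 < (norm y)\<^sup>2" using False by simp
    fix t
    have "cinner (x - t *\<^sub>C y) (x - t *\<^sub>C y) =
        cinner x x - (cnj t * cinner x y + cnj (cnj t * cinner x y)) + (t * cnj t) * cinner y y"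
      by (simp add: cinner_diff_left cinner_diff_right cinner_scaleC_left cinner_scaleC_right
          cinner_commute[of y x] algebra_simps)
    also have "\<dots> = complex_of_real ((norm x)\<^sup>2 - 2 * Re (cnj t * cinner x y) + (cmod t)\<^sup>2 * (norm y)\<^sup>2)"
      by (simp only: complex_add_cnj complex_norm_square[symmetric] cinner_self of_real_mult
          of_real_add of_real_diff)
    finally show "0 \<le> (norm x)\<^sup>2 - 2 * Re (cnj t * cinner x y) + (cmod t)\<^sup>2 * (norm y)\<^sup>2"
      by (metis Re_complex_of_real cinner_ge_zero)
  qed
  then have "(cmod (cinner x y))\<^sup>2 \<le> (norm x * norm y)\<^sup>2"
    by (simp add: power_mult_distrib)
  then show ?thesis
    by (rule power2_le_imp_le) simp
qed simp

lemma cnj_mult_self: "cnj z * z = complex_of_real ((cmod z)\<^sup>2)"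
  by (metis complex_norm_square mult.commute)

lemma bounded_linear_cinner_left: "bounded_linear (\<lambda>x. cinner x (y::'a::complex_inner))"
proof (rule bounded_linear_intro[where K = "norm y"])
  show "cinner (r *\<^sub>R x) y = r *\<^sub>R cinner x y" for r x
    by (simp add: scaleR_scaleC cinner_scaleC_left scaleR_conv_of_real)
  show "norm (cinner x y) \<le> norm x * norm y" for x
    using cauchy_schwarz_cinner[of x y] by simp
qed (rule cinner_add_left)

lemma cunitary_cinner: "cunitary U \<Longrightarrow> cinner (U x) (U y) = cinner x y"
  by (simp add: cunitary_def)

lemma cunitary_scaleC: "cunitary U \<Longrightarrow> U (c *\<^sub>C x) = c *\<^sub>C U x"
  by (simp add: cunitary_def)

lemma cunitary_norm: "cunitary U \<Longrightarrow> norm (U x) = norm x"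
  by (simp add: norm_eq_sqrt_cinner cunitary_cinner)

lemma cunitary_bounded_linear: "cunitary U \<Longrightarrow> bounded_linear U"
  by (rule bounded_linear_intro[where K = 1])
     (simp_all add: cunitary_def scaleR_scaleC cunitary_norm)

lemma cunitary_inj: "cunitary U \<Longrightarrow> inj U"
proof (rule injI)
  fix x y assume U: "cunitary U" and "U x = U y"
  then have "U (x - y) = 0"
    using linear_diff[OF bounded_linear.linear[OF cunitary_bounded_linear[OF U]]] by simp
  then show "x = y"
    using cunitary_norm[OF U, of "x - y"] by simp
qed

section \<open>The space \<open>\<ell>\<^sup>2(G)\<close>\<close>

abbreviation l2_dist :: "('g, 'b) monoid_scheme \<Rightarrow> ('g \<Rightarrow> complex) \<Rightarrow> ('g \<Rightarrow> complex) \<Rightarrow> real"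
  where "l2_dist G f h \<equiv> l2_norm G (\<lambda>g. f g - h g)"

lemma l2_vanishes: "f \<in> l2 G \<Longrightarrow> g \<notin> carrier G \<Longrightarrow> f g = 0"
  by (simp add: l2_def)

lemma l2_summable: "f \<in> l2 G \<Longrightarrow> (\<lambda>g. (cmod (f g))\<^sup>2) summable_on carrier G"
  by (simp add: l2_def)

lemma l2_zero: "(\<lambda>g. 0) \<in> l2 G"
  by (simp add: l2_def)

lemma l2_add: assumes "f \<in> l2 G" "h \<in> l2 G" shows "(\<lambda>g. f g + h g) \<in> l2 G"
proof -
  have summable: "(\<lambda>g. 2 * (cmod (f g))\<^sup>2 + 2 * (cmod (h g))\<^sup>2) summable_on carrier G"
    using assms by (intro summable_on_add summable_on_cmult_right l2_summable)
  have "(cmod (f g + h g))\<^sup>2 \<le> 2 * (cmod (f g))\<^sup>2 + 2 * (cmod (h g))\<^sup>2" for g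
  proof -
    have "(cmod (f g + h g))\<^sup>2 \<le> (cmod (f g) + cmod (h g))\<^sup>2"
      by (rule power_mono[OF norm_triangle_ineq]) simp
    also have "\<dots> \<le> 2 * (cmod (f g))\<^sup>2 + 2 * (cmod (h g))\<^sup>2"
      using sum_squares_bound[of "cmod (f g)" "cmod (h g)"] unfolding power2_sum by linarith
    finally show ?thesis .
  qed
  then have "(\<lambda>g. (cmod (f g + h g))\<^sup>2) summable_on carrier G"
    by (intro summable_on_comparison_test[OF summable]) auto
  then show ?thesis using assms by (simp add: l2_def)
qed

lemma l2_scale: assumes "f \<in> l2 G" shows "(\<lambda>g. c * f g) \<in> l2 G"
proof -
  have "(\<lambda>g. (cmod c)\<^sup>2 * (cmod (f g))\<^sup>2) summable_on carrier G"
    using assms by (intro summable_on_cmult_right l2_summable)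
  then show ?thesis using assms by (simp add: l2_def norm_mult power_mult_distrib)
qed

lemma l2_diff: assumes "f \<in> l2 G" "h \<in> l2 G" shows "(\<lambda>g. f g - h g) \<in> l2 G"
  using l2_add[OF assms(1) l2_scale[OF assms(2), of "-1"]] by simp

lemma l2_indicator: assumes "h \<in> carrier G" shows "indicator {h} \<in> l2 G"
proof -
  have "(\<lambda>g. (cmod (indicator {h} g :: complex))\<^sup>2) summable_on {h}" by simp
  then have "(\<lambda>g. (cmod (indicator {h} g :: complex))\<^sup>2) summable_on carrier G"
    by (rule iffD1[OF summable_on_cong_neutral, rotated -1]) (use assms in auto)
  then show ?thesis using assms by (auto simp: l2_def indicator_def)
qed

lemma l2_inner_summable:
  assumes "f \<in> l2 G" "h \<in> l2 G"
  shows "(\<lambda>g. f g * cnj (h g)) summable_on carrier G"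
proof (rule abs_summable_summable)
  have "norm (f g * cnj (h g)) \<le> (cmod (f g))\<^sup>2 + (cmod (h g))\<^sup>2" for g
    using sum_squares_bound[of "cmod (f g)" "cmod (h g)"]
      mult_nonneg_nonneg[OF norm_ge_zero norm_ge_zero, of "f g" "h g"]
    unfolding norm_mult complex_mod_cnj by linarith
  then show "(\<lambda>g. norm (f g * cnj (h g))) summable_on carrier G"
    by (rule summable_on_comparison_test[OF summable_on_add[OF l2_summable[OF assms(1)]
          l2_summable[OF assms(2)]]]) auto
qed

lemma l2_inner_add_left:
  assumes "f \<in> l2 G" "f' \<in> l2 G" "h \<in> l2 G"
  shows "l2_inner G (\<lambda>g. f g + f' g) h = l2_inner G f h + l2_inner G f' h"
  unfolding l2_inner_def distrib_right
  by (rule infsum_add; intro l2_inner_summable assms)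

lemma l2_inner_scale_left: "l2_inner G (\<lambda>g. c * f g) h = c * l2_inner G f h"
  unfolding l2_inner_def mult.assoc by (rule infsum_cmult_right')

lemma l2_inner_commute: "l2_inner G f h = cnj (l2_inner G h f)"
  unfolding l2_inner_def by (simp flip: infsum_cnj add: mult.commute)

lemma l2_inner_diff_left:
  assumes "f \<in> l2 G" "f' \<in> l2 G" "h \<in> l2 G"
  shows "l2_inner G (\<lambda>g. f g - f' g) h = l2_inner G f h - l2_inner G f' h"
  using l2_inner_add_left[OF assms(1) l2_scale[OF assms(2), of "-1"] assms(3)]
    l2_inner_scale_left[of G "-1" f' h]
  by simp

lemma l2_inner_add_right:
  assumes "f \<in> l2 G" "h \<in> l2 G" "h' \<in> l2 G"
  shows "l2_inner G f (\<lambda>g. h g + h' g) = l2_inner G f h + l2_inner G f h'"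
  by (subst (1 2 3) l2_inner_commute) (simp add: l2_inner_add_left assms)

lemma l2_inner_scale_right: "l2_inner G f (\<lambda>g. c * h g) = cnj c * l2_inner G f h"
  by (subst (1 2) l2_inner_commute) (simp add: l2_inner_scale_left)

lemma l2_inner_diff_right:
  assumes "f \<in> l2 G" "h \<in> l2 G" "h' \<in> l2 G"
  shows "l2_inner G f (\<lambda>g. h g - h' g) = l2_inner G f h - l2_inner G f h'"
  by (subst (1 2 3) l2_inner_commute) (simp add: l2_inner_diff_left assms)

lemma l2_inner_indicator:
  assumes "h \<in> carrier G"
  shows "l2_inner G f (indicator {h}) = f h"
proof -
  have "l2_inner G f (indicator {h}) = (\<Sum>\<^sub>\<infinity>g\<in>{h}. f g * cnj (indicator {h} g))"
    unfolding l2_inner_def by (rule infsum_cong_neutral) (use assms in auto)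
  then show ?thesis by simp
qed

lemma l2_norm_power2: "(l2_norm G f)\<^sup>2 = (\<Sum>\<^sub>\<infinity>g\<in>carrier G. (cmod (f g))\<^sup>2)"
proof -
  have "0 \<le> (\<Sum>\<^sub>\<infinity>g\<in>carrier G. (cmod (f g))\<^sup>2)" by (rule infsum_nonneg) simp
  then show ?thesis by (simp add: l2_norm_def)
qed

lemma l2_norm_nonneg: "0 \<le> l2_norm G f"
  unfolding l2_norm_def by (rule real_sqrt_ge_zero, rule infsum_nonneg) simp

lemma l2_inner_self:
  assumes "f \<in> l2 G"
  shows "l2_inner G f f = complex_of_real ((l2_norm G f)\<^sup>2)"
proof -
  have "l2_inner G f f = (\<Sum>\<^sub>\<infinity>g\<in>carrier G. complex_of_real ((cmod (f g))\<^sup>2))"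
    unfolding l2_inner_def by (simp only: complex_norm_square)
  also have "\<dots> = complex_of_real ((l2_norm G f)\<^sup>2)"
    unfolding l2_norm_power2 using l2_summable[OF assms]
    by (intro infsumI has_sum_of_real has_sum_infsum)
  finally show ?thesis .
qed

lemma sum_le_l2_norm_power2:
  assumes "f \<in> l2 G" "finite F" "F \<subseteq> carrier G"
  shows "(\<Sum>g\<in>F. (cmod (f g))\<^sup>2) \<le> (l2_norm G f)\<^sup>2"
proof -
  have "(\<Sum>g\<in>F. (cmod (f g))\<^sup>2) = (\<Sum>\<^sub>\<infinity>g\<in>F. (cmod (f g))\<^sup>2)"
    using assms(2) by simp
  also have "\<dots> \<le> (\<Sum>\<^sub>\<infinity>g\<in>carrier G. (cmod (f g))\<^sup>2)"
    using assms l2_summable[OF assms(1)] by (intro infsum_mono_neutral) auto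
  finally show ?thesis by (simp only: l2_norm_power2)
qed

lemma norm_le_l2_norm: assumes "f \<in> l2 G" shows "cmod (f g) \<le> l2_norm G f"
proof (cases "g \<in> carrier G")
  case True
  then have "(cmod (f g))\<^sup>2 \<le> (l2_norm G f)\<^sup>2"
    using sum_le_l2_norm_power2[OF assms, of "{g}"] by simp
  then show ?thesis by (rule power2_le_imp_le) (simp add: l2_norm_nonneg)
next
  case False
  then show ?thesis using assms by (simp add: l2_vanishes l2_norm_nonneg)
qed

lemma l2_norm_eq_0: assumes "f \<in> l2 G" "l2_norm G f = 0" shows "f = (\<lambda>g. 0)"
  using norm_le_l2_norm[OF assms(1)] assms(2) by fastforce

lemma l2_norm_scale: assumes "f \<in> l2 G" shows "l2_norm G (\<lambda>g. c * f g) = cmod c * l2_norm G f"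
proof -
  have "complex_of_real ((l2_norm G (\<lambda>g. c * f g))\<^sup>2) = (c * cnj c) * l2_inner G f f"
    by (simp only: l2_inner_self[OF l2_scale[OF assms], symmetric] l2_inner_scale_left
        l2_inner_scale_right mult_ac)
  also have "\<dots> = complex_of_real ((cmod c * l2_norm G f)\<^sup>2)"
    by (simp only: complex_norm_square[symmetric] l2_inner_self[OF assms] of_real_mult[symmetric]
        power_mult_distrib)
  finally show ?thesis
    by (simp only: of_real_eq_iff power2_eq_iff_nonneg l2_norm_nonneg norm_ge_zero mult_nonneg_nonneg)
qed

lemma l2_dist_commute: assumes "f \<in> l2 G" "h \<in> l2 G" shows "l2_dist G f h = l2_dist G h f"
  using l2_norm_scale[OF l2_diff[OF assms], of "-1"] by simp

lemma l2_norm_add_power2: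
  assumes "f \<in> l2 G" "h \<in> l2 G"
  shows "(l2_norm G (\<lambda>g. f g + h g))\<^sup>2 = (l2_norm G f)\<^sup>2 + (l2_norm G h)\<^sup>2 + 2 * Re (l2_inner G f h)"
proof -
  have "complex_of_real ((l2_norm G (\<lambda>g. f g + h g))\<^sup>2) = l2_inner G (\<lambda>g. f g + h g) (\<lambda>g. f g + h g)"
    by (rule l2_inner_self[symmetric, OF l2_add[OF assms]])
  also have "\<dots> = l2_inner G f f + l2_inner G h h + (l2_inner G f h + cnj (l2_inner G f h))"
    using assms by (simp add: l2_add l2_inner_add_left l2_inner_add_right
        l2_inner_commute[of G h f] algebra_simps)
  also have "\<dots> = complex_of_real ((l2_norm G f)\<^sup>2 + (l2_norm G h)\<^sup>2 + 2 * Re (l2_inner G f h))"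
    by (simp add: assms l2_inner_self complex_add_cnj)
  finally show ?thesis by (simp only: of_real_eq_iff)
qed

lemma l2_dist_power2:
  assumes "f \<in> l2 G" "h \<in> l2 G"
  shows "(l2_dist G f h)\<^sup>2 = (l2_norm G f)\<^sup>2 + (l2_norm G h)\<^sup>2 - 2 * Re (l2_inner G f h)"
  using l2_norm_add_power2[OF assms(1) l2_scale[OF assms(2), of "-1"]]
    l2_norm_scale[OF assms(2), of "-1"] l2_inner_scale_right[of G f "-1" h]
  by simp

lemma l2_cauchy_schwarz:
  assumes "f \<in> l2 G" "h \<in> l2 G"
  shows "cmod (l2_inner G f h) \<le> l2_norm G f * l2_norm G h"
proof (cases "l2_norm G h = 0")
  case False
  have "(cmod (l2_inner G f h))\<^sup>2 \<le> (l2_norm G f)\<^sup>2 * (l2_norm G h)\<^sup>2"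
  proof (rule cauchy_schwarz_from_quadratic)
    show "0 < (l2_norm G h)\<^sup>2" using False by simp
    fix t
    have "0 \<le> (l2_dist G f (\<lambda>g. t * h g))\<^sup>2" by simp
    also have "\<dots> = (l2_norm G f)\<^sup>2 + (cmod t * l2_norm G h)\<^sup>2 - 2 * Re (cnj t * l2_inner G f h)"
      by (simp only: l2_dist_power2[OF assms(1) l2_scale[OF assms(2)]] l2_norm_scale[OF assms(2)]
          l2_inner_scale_right)
    also have "\<dots> = (l2_norm G f)\<^sup>2 - 2 * Re (cnj t * l2_inner G f h) + (cmod t)\<^sup>2 * (l2_norm G h)\<^sup>2"
      by (simp add: power_mult_distrib)
    finally show "0 \<le> (l2_norm G f)\<^sup>2 - 2 * Re (cnj t * l2_inner G f h) + (cmod t)\<^sup>2 * (l2_norm G h)\<^sup>2" .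
  qed
  then have "(cmod (l2_inner G f h))\<^sup>2 \<le> (l2_norm G f * l2_norm G h)\<^sup>2"
    by (simp add: power_mult_distrib)
  then show ?thesis
    by (rule power2_le_imp_le) (simp add: l2_norm_nonneg)
next
  case True
  then have "h = (\<lambda>g. 0)" by (rule l2_norm_eq_0[OF assms(2)])
  then show ?thesis by (simp add: l2_inner_def l2_norm_nonneg)
qed

lemma l2_triangle:
  assumes "f \<in> l2 G" "h \<in> l2 G"
  shows "l2_norm G (\<lambda>g. f g + h g) \<le> l2_norm G f + l2_norm G h"
proof -
  have "Re (l2_inner G f h) \<le> l2_norm G f * l2_norm G h"
    using l2_cauchy_schwarz[OF assms] complex_Re_le_cmod order_trans by blast
  then have "(l2_norm G (\<lambda>g. f g + h g))\<^sup>2 \<le> (l2_norm G f + l2_norm G h)\<^sup>2"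
    unfolding l2_norm_add_power2[OF assms] power2_sum by linarith
  then show ?thesis by (rule power2_le_imp_le) (simp add: l2_norm_nonneg)
qed

lemma l2_dist_triangle:
  assumes "f \<in> l2 G" "h \<in> l2 G" "k \<in> l2 G"
  shows "l2_dist G f k \<le> l2_dist G f h + l2_dist G h k"
  using l2_triangle[OF l2_diff[OF assms(1,2)] l2_diff[OF assms(2,3)]] by simp

lemma l2_parallelogram:
  assumes "u \<in> l2 G" "v \<in> l2 G"
  shows "(l2_dist G u v)\<^sup>2 + (l2_norm G (\<lambda>g. u g + v g))\<^sup>2 = 2 * (l2_norm G u)\<^sup>2 + 2 * (l2_norm G v)\<^sup>2"
  using l2_dist_power2[OF assms] l2_norm_add_power2[OF assms] by simp

lemma l2_midpoint_dist:
  assumes "a \<in> l2 G" "u \<in> l2 G" "v \<in> l2 G"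
  shows "(l2_dist G u v)\<^sup>2 =
    2 * (l2_dist G a u)\<^sup>2 + 2 * (l2_dist G a v)\<^sup>2 - 4 * (l2_dist G a (\<lambda>g. 1/2 * (u g + v g)))\<^sup>2"
proof -
  have "(\<lambda>g. (a g - u g) + (a g - v g)) = (\<lambda>g. 2 * (a g - 1/2 * (u g + v g)))"
    by (simp add: fun_eq_iff field_simps)
  then have "l2_norm G (\<lambda>g. (a g - u g) + (a g - v g)) = 2 * l2_dist G a (\<lambda>g. 1/2 * (u g + v g))"
    using l2_norm_scale[OF l2_diff[OF assms(1) l2_scale[OF l2_add[OF assms(2,3)], of "1/2"]], of 2]
    by simp
  moreover have "(\<lambda>g. (a g - u g) - (a g - v g)) = (\<lambda>g. v g - u g)"
    by (simp add: fun_eq_iff)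
  ultimately show ?thesis
    using l2_parallelogram[OF l2_diff[OF assms(1,2)] l2_diff[OF assms(1,3)]]
    unfolding l2_dist_commute[OF assms(2,3)] by (simp add: power_mult_distrib)
qed

lemma l2_memI_finite_sums:
  assumes "\<And>g. g \<notin> carrier G \<Longrightarrow> f g = 0"
    and "\<And>F. finite F \<Longrightarrow> F \<subseteq> carrier G \<Longrightarrow> (\<Sum>g\<in>F. (cmod (f g))\<^sup>2) \<le> B"
  shows "f \<in> l2 G" and "(l2_norm G f)\<^sup>2 \<le> B"
proof -
  have summable: "(\<lambda>g. (cmod (f g))\<^sup>2) summable_on carrier G"
    by (rule nonneg_bdd_above_summable_on) (auto intro!: bdd_aboveI2 assms(2))
  then show "f \<in> l2 G" using assms(1) by (simp add: l2_def)
  show "(l2_norm G f)\<^sup>2 \<le> B"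
    unfolding l2_norm_power2 by (rule infsum_le_finite_sums[OF summable assms(2)])
qed

lemma l2_dist_le_pointwise_limit:
  assumes s: "\<And>j. s j \<in> l2 G" and a: "a \<in> l2 G"
    and lim: "\<And>g. (\<lambda>j. s j g) \<longlonglongrightarrow> f g" and f: "\<And>g. g \<notin> carrier G \<Longrightarrow> f g = 0"
    and bound: "\<And>j. j \<ge> N \<Longrightarrow> l2_dist G a (s j) \<le> e"
  shows "(\<lambda>g. a g - f g) \<in> l2 G" and "l2_dist G a f \<le> e"
proof -
  have e: "0 \<le> e" using bound[of N] l2_norm_nonneg order_trans by blast
  have finite_sums: "(\<Sum>g\<in>F. (cmod (a g - f g))\<^sup>2) \<le> e\<^sup>2" if F: "finite F" "F \<subseteq> carrier G" for F
  proof (rule LIMSEQ_le_const2)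
    show "(\<lambda>j. \<Sum>g\<in>F. (cmod (a g - s j g))\<^sup>2) \<longlonglongrightarrow> (\<Sum>g\<in>F. (cmod (a g - f g))\<^sup>2)"
      by (intro tendsto_intros lim)
    have "(\<Sum>g\<in>F. (cmod (a g - s j g))\<^sup>2) \<le> e\<^sup>2" if "j \<ge> N" for j
      using sum_le_l2_norm_power2[OF l2_diff[OF a s[of j]] F]
        power_mono[OF bound[OF that] l2_norm_nonneg, of 2] by linarith
    then show "\<exists>N. \<forall>j\<ge>N. (\<Sum>g\<in>F. (cmod (a g - s j g))\<^sup>2) \<le> e\<^sup>2" by blast
  qed
  show "(\<lambda>g. a g - f g) \<in> l2 G"
    by (rule l2_memI_finite_sums(1)[OF _ finite_sums]) (simp_all add: f l2_vanishes[OF a])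
  have "(l2_dist G a f)\<^sup>2 \<le> e\<^sup>2"
    by (rule l2_memI_finite_sums(2)[OF _ finite_sums]) (simp_all add: f l2_vanishes[OF a])
  then show "l2_dist G a f \<le> e"
    using e by (rule power2_le_imp_le)
qed

lemma l2_complete:
  assumes s: "\<And>j. s j \<in> l2 G"
    and Cauchy: "\<And>e. e > 0 \<Longrightarrow> \<exists>N. \<forall>i\<ge>N. \<forall>j\<ge>N. l2_dist G (s i) (s j) < e"
  shows "\<exists>f\<in>l2 G. (\<lambda>j. l2_dist G (s j) f) \<longlonglongrightarrow> 0"
proof -
  have "Cauchy (\<lambda>j. s j g)" for g
  proof (rule metric_CauchyI)
    fix e :: real assume "e > 0"
    then obtain N where N: "\<forall>i\<ge>N. \<forall>j\<ge>N. l2_dist G (s i) (s j) < e" using Cauchy by blast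
    have "dist (s i g) (s j g) < e" if "i \<ge> N" "j \<ge> N" for i j
      using norm_le_l2_norm[OF l2_diff[OF s[of i] s[of j]], of g] N that
      by (auto simp: dist_norm intro: le_less_trans)
    then show "\<exists>N. \<forall>i\<ge>N. \<forall>j\<ge>N. dist (s i g) (s j g) < e" by blast
  qed
  then have lim: "(\<lambda>j. s j g) \<longlonglongrightarrow> f g" if "f = (\<lambda>g. lim (\<lambda>j. s j g))" for f g
    using that by (simp add: Cauchy_convergent_iff convergent_LIMSEQ_iff)
  define f where "f = (\<lambda>g. lim (\<lambda>j. s j g))"
  note lim = lim[OF f_def]
  have f_out: "f g = 0" if "g \<notin> carrier G" for g
    using LIMSEQ_unique[OF lim[of g]] l2_vanishes[OF s that] by simp
  have close: "(\<lambda>g. s i g - f g) \<in> l2 G \<and> l2_dist G (s i) f \<le> e"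
    if N: "\<forall>i\<ge>N. \<forall>j\<ge>N. l2_dist G (s i) (s j) < e" and i: "i \<ge> N" for e N i
  proof -
    have "l2_dist G (s i) (s j) \<le> e" if "j \<ge> N" for j
      using N i that by (simp add: less_imp_le)
    then show ?thesis
      using l2_dist_le_pointwise_limit[OF s s[of i] lim f_out] by blast
  qed
  obtain N where "\<forall>i\<ge>N. \<forall>j\<ge>N. l2_dist G (s i) (s j) < 1" using Cauchy[of 1] by auto
  then have "(\<lambda>g. s N g - f g) \<in> l2 G" using close by blast
  from l2_diff[OF s[of N] this] have "f \<in> l2 G" by simp
  moreover have "(\<lambda>j. l2_dist G (s j) f) \<longlonglongrightarrow> 0"
  proof (rule LIMSEQ_I)
    fix r :: real assume "r > 0"
    then obtain N where "\<forall>i\<ge>N. \<forall>j\<ge>N. l2_dist G (s i) (s j) < r / 2" using Cauchy[of "r/2"] by auto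
    then have "norm (l2_dist G (s j) f - 0) < r" if "j \<ge> N" for j
      using close[of N "r/2" j] that \<open>r > 0\<close> by (simp add: l2_norm_nonneg)
    then show "\<exists>N. \<forall>j\<ge>N. norm (l2_dist G (s j) f - 0) < r" by blast
  qed
  ultimately show ?thesis by auto
qed
section \<open>Closed subspaces of \<open>\<ell>\<^sup>2(G)\<close> and orthogonal projections\<close>

definition l2_subspace :: "('g, 'b) monoid_scheme \<Rightarrow> ('g \<Rightarrow> complex) set \<Rightarrow> bool" where
  "l2_subspace G S \<longleftrightarrow> S \<subseteq> l2 G \<and> (\<lambda>g. 0) \<in> S \<and>
     (\<forall>f\<in>S. \<forall>h\<in>S. (\<lambda>g. f g + h g) \<in> S) \<and> (\<forall>c. \<forall>f\<in>S. (\<lambda>g. c * f g) \<in> S)"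

definition l2_closed :: "('g, 'b) monoid_scheme \<Rightarrow> ('g \<Rightarrow> complex) set \<Rightarrow> bool" where
  "l2_closed G S \<longleftrightarrow>
     (\<forall>s f. (\<forall>j. s j \<in> S) \<longrightarrow> f \<in> l2 G \<longrightarrow> (\<lambda>j. l2_dist G (s j) f) \<longlonglongrightarrow> 0 \<longrightarrow> f \<in> S)"

definition l2_orth :: "('g, 'b) monoid_scheme \<Rightarrow> ('g \<Rightarrow> complex) set \<Rightarrow> ('g \<Rightarrow> complex) set" where
  "l2_orth G M = {n \<in> l2 G. \<forall>b\<in>M. l2_inner G n b = 0}"

definition l2_closure :: "('g, 'b) monoid_scheme \<Rightarrow> ('g \<Rightarrow> complex) set \<Rightarrow> ('g \<Rightarrow> complex) set" where
  "l2_closure G M = {u \<in> l2 G. \<forall>e>0. \<exists>s\<in>M. l2_dist G u s < e}"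

lemma l2_subspaceD:
  assumes "l2_subspace G S"
  shows "S \<subseteq> l2 G" and "(\<lambda>g. 0) \<in> S"
    and "\<And>f h. f \<in> S \<Longrightarrow> h \<in> S \<Longrightarrow> (\<lambda>g. f g + h g) \<in> S"
    and "\<And>c f. f \<in> S \<Longrightarrow> (\<lambda>g. c * f g) \<in> S"
  using assms by (auto simp: l2_subspace_def)

lemma l2_closedD:
  "l2_closed G S \<Longrightarrow> (\<And>j. s j \<in> S) \<Longrightarrow> f \<in> l2 G \<Longrightarrow> (\<lambda>j. l2_dist G (s j) f) \<longlonglongrightarrow> 0 \<Longrightarrow> f \<in> S"
  by (auto simp: l2_closed_def)

lemma l2_subspace_orth:
  assumes "M \<subseteq> l2 G"
  shows "l2_subspace G (l2_orth G M)"
  unfolding l2_subspace_def l2_orth_def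
  by (auto simp: l2_zero l2_add l2_scale l2_inner_add_left[OF _ _ subsetD[OF assms]]
      l2_inner_scale_left) (simp add: l2_inner_def)

lemma l2_closed_orth:
  assumes M: "M \<subseteq> l2 G"
  shows "l2_closed G (l2_orth G M)"
  unfolding l2_closed_def
proof (intro allI impI)
  fix s f assume s: "\<forall>j. s j \<in> l2_orth G M" and f: "f \<in> l2 G"
    and lim: "(\<lambda>j. l2_dist G (s j) f) \<longlonglongrightarrow> 0"
  have "l2_inner G f b = 0" if b: "b \<in> M" for b
  proof -
    have sl: "s j \<in> l2 G" for j using s by (simp add: l2_orth_def)
    have "cmod (l2_inner G f b) \<le> l2_dist G (s j) f * l2_norm G b" for j
    proof -
      have "l2_inner G f b = - l2_inner G (\<lambda>g. s j g - f g) b"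
        using s b l2_inner_diff_left[OF sl f, of b] M by (auto simp: l2_orth_def)
      then show ?thesis
        using l2_cauchy_schwarz[OF l2_diff[OF sl f], of b] M b by auto
    qed
    moreover have "(\<lambda>j. l2_dist G (s j) f * l2_norm G b) \<longlonglongrightarrow> 0 * l2_norm G b"
      by (intro tendsto_intros lim)
    ultimately have "cmod (l2_inner G f b) \<le> 0 * l2_norm G b"
      by (intro LIMSEQ_le_const[of "\<lambda>j. l2_dist G (s j) f * l2_norm G b"]) auto
    then show ?thesis by simp
  qed
  then show "f \<in> l2_orth G M" using f by (simp add: l2_orth_def)
qed

lemma l2_orth_antimono: "M \<subseteq> M' \<Longrightarrow> l2_orth G M' \<subseteq> l2_orth G M"
  by (auto simp: l2_orth_def)

lemma l2_closureD: "u \<in> l2_closure G M \<Longrightarrow> e > 0 \<Longrightarrow> \<exists>s\<in>M. l2_dist G u s < e"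
  by (simp add: l2_closure_def)

lemma subset_l2_closure: "M \<subseteq> l2 G \<Longrightarrow> M \<subseteq> l2_closure G M"
  by (force simp: l2_closure_def l2_norm_def)

lemma l2_closure_add:
  assumes M: "l2_subspace G M" and f: "f \<in> l2_closure G M" and h: "h \<in> l2_closure G M"
  shows "(\<lambda>g. f g + h g) \<in> l2_closure G M"
proof -
  note M = l2_subspaceD[OF M]
  have "\<exists>s\<in>M. l2_dist G (\<lambda>g. f g + h g) s < e" if "e > 0" for e
  proof -
    obtain s where s: "s \<in> M" "l2_dist G f s < e / 2"
      using l2_closureD[OF f, of "e / 2"] \<open>e > 0\<close> by auto
    obtain t where t: "t \<in> M" "l2_dist G h t < e / 2"
      using l2_closureD[OF h, of "e / 2"] \<open>e > 0\<close> by auto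
    have l2: "f \<in> l2 G" "h \<in> l2 G" "s \<in> l2 G" "t \<in> l2 G"
      using f h s t M(1) by (auto simp: l2_closure_def)
    have "l2_dist G (\<lambda>g. f g + h g) (\<lambda>g. s g + t g) = l2_norm G (\<lambda>g. (f g - s g) + (h g - t g))"
      by (rule arg_cong[where f = "l2_norm G"]) (simp add: fun_eq_iff algebra_simps)
    also have "\<dots> \<le> l2_dist G f s + l2_dist G h t"
      by (rule l2_triangle[OF l2_diff[OF l2(1,3)] l2_diff[OF l2(2,4)]])
    finally show ?thesis using s t by (intro bexI[OF _ M(3)[OF s(1) t(1)]]) linarith
  qed
  then show ?thesis using f h by (auto simp: l2_closure_def intro!: l2_add)
qed

lemma l2_closure_scale:
  assumes M: "l2_subspace G M" and f: "f \<in> l2_closure G M"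
  shows "(\<lambda>g. c * f g) \<in> l2_closure G M"
proof -
  note M = l2_subspaceD[OF M]
  have "\<exists>s\<in>M. l2_dist G (\<lambda>g. c * f g) s < e" if "e > 0" for e
  proof -
    have cpos: "cmod c + 1 > 0" by (simp add: add_nonneg_pos)
    then obtain s where s: "s \<in> M" "l2_dist G f s < e / (cmod c + 1)"
      using l2_closureD[OF f, of "e / (cmod c + 1)"] \<open>e > 0\<close> by auto
    have "f \<in> l2 G" "s \<in> l2 G" using f s M(1) by (auto simp: l2_closure_def)
    moreover have "(\<lambda>g. c * f g - c * s g) = (\<lambda>g. c * (f g - s g))" by (simp add: algebra_simps)
    ultimately have "l2_dist G (\<lambda>g. c * f g) (\<lambda>g. c * s g) = cmod c * l2_dist G f s"
      using l2_norm_scale[OF l2_diff, of f G s c] by simp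
    also have "\<dots> \<le> (cmod c + 1) * l2_dist G f s"
      by (simp add: l2_norm_nonneg mult_right_mono)
    also have "\<dots> < e"
      using mult_strict_left_mono[OF s(2) cpos] cpos by simp
    finally show ?thesis by (intro bexI[OF _ M(4)[OF s(1)]])
  qed
  then show ?thesis using f by (auto simp: l2_closure_def intro!: l2_scale)
qed

lemma l2_subspace_closure:
  assumes M: "l2_subspace G M"
  shows "l2_subspace G (l2_closure G M)"
proof -
  have "l2_closure G M \<subseteq> l2 G" by (auto simp: l2_closure_def)
  moreover have "(\<lambda>g. 0) \<in> l2_closure G M"
    using subset_l2_closure[OF l2_subspaceD(1)[OF M]] l2_subspaceD(2)[OF M] by blast
  ultimately show ?thesis
    unfolding l2_subspace_def using l2_closure_add[OF M] l2_closure_scale[OF M] by blast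
qed

lemma l2_closed_closure:
  assumes M: "M \<subseteq> l2 G"
  shows "l2_closed G (l2_closure G M)"
  unfolding l2_closed_def
proof (intro allI impI)
  fix s f assume s: "\<forall>j. s j \<in> l2_closure G M" and f: "f \<in> l2 G"
    and lim: "(\<lambda>j. l2_dist G (s j) f) \<longlonglongrightarrow> 0"
  have "\<exists>t\<in>M. l2_dist G f t < e" if "e > 0" for e
  proof -
    obtain j where "\<forall>i\<ge>j. norm (l2_dist G (s i) f - 0) < e / 2"
      using LIMSEQ_D[OF lim, of "e / 2"] \<open>e > 0\<close> by auto
    then have j: "l2_dist G (s j) f < e / 2" by (simp add: l2_norm_nonneg)
    obtain t where t: "t \<in> M" "l2_dist G (s j) t < e / 2"
      using l2_closureD[OF s[rule_format, of j], of "e / 2"] \<open>e > 0\<close> by auto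
    have "s j \<in> l2 G" using s by (simp add: l2_closure_def)
    then have "l2_dist G f t \<le> l2_dist G (s j) f + l2_dist G (s j) t"
      using l2_dist_triangle[OF f _ subsetD[OF M t(1)]] l2_dist_commute[OF f] by simp
    then show ?thesis using j t by (intro bexI[OF _ t(1)]) linarith
  qed
  then show "f \<in> l2_closure G M" using f by (simp add: l2_closure_def)
qed
lemma l2_minimizing_sequence_Cauchy:
  assumes S: "l2_subspace G S" and a: "a \<in> l2 G" and s: "\<And>j. s j \<in> S"
    and d: "\<And>t. t \<in> S \<Longrightarrow> d \<le> (l2_dist G a t)\<^sup>2"
    and sd: "\<And>j. (l2_dist G a (s j))\<^sup>2 < d + inverse (real (Suc j))" and "e > 0"
  shows "\<exists>N. \<forall>i\<ge>N. \<forall>j\<ge>N. l2_dist G (s i) (s j) < e"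
proof -
  note S = l2_subspaceD[OF S]
  have bound: "(l2_dist G (s i) (s j))\<^sup>2 \<le> 2 * inverse (real (Suc i)) + 2 * inverse (real (Suc j))"
    for i j
  proof -
    have "s i \<in> l2 G" "s j \<in> l2 G" using s S(1) by auto
    then have "(l2_dist G (s i) (s j))\<^sup>2 = 2 * (l2_dist G a (s i))\<^sup>2 + 2 * (l2_dist G a (s j))\<^sup>2
        - 4 * (l2_dist G a (\<lambda>g. 1/2 * (s i g + s j g)))\<^sup>2"
      by (rule l2_midpoint_dist[OF a])
    then show ?thesis using d[OF S(4)[OF S(3)[OF s[of i] s[of j]], of "1/2"]] sd[of i] sd[of j] by linarith
  qed
  obtain N :: nat where N: "4 / e\<^sup>2 < real N" using reals_Archimedean2 by blast
  then have "0 < real N" using \<open>e > 0\<close> by (smt (verit) divide_pos_pos zero_less_power)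
  have "l2_dist G (s i) (s j) < e" if "i \<ge> N" "j \<ge> N" for i j
  proof -
    have "inverse (real (Suc i)) \<le> inverse (real N)" "inverse (real (Suc j)) \<le> inverse (real N)"
      using that \<open>0 < real N\<close> by (auto intro!: le_imp_inverse_le)
    then have "(l2_dist G (s i) (s j))\<^sup>2 \<le> 4 * inverse (real N)"
      using bound[of i j] by linarith
    also have "4 * inverse (real N) < e\<^sup>2"
      using N \<open>0 < real N\<close> \<open>e > 0\<close> by (simp add: field_simps)
    finally show ?thesis by (rule power2_less_imp_less) (use \<open>e > 0\<close> in simp)
  qed
  then show ?thesis by blast
qed

lemma l2_closest_point_exists:
  assumes S: "l2_subspace G S" "l2_closed G S" and a: "a \<in> l2 G"
  shows "\<exists>q\<in>S. \<forall>t\<in>S. l2_dist G a q \<le> l2_dist G a t"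
proof -
  define d where "d = (INF t\<in>S. (l2_dist G a t)\<^sup>2)"
  have d_le: "d \<le> (l2_dist G a t)\<^sup>2" if "t \<in> S" for t
    unfolding d_def by (rule cINF_lower) (auto intro: bdd_belowI2[where m = 0] that)
  have "\<exists>t\<in>S. (l2_dist G a t)\<^sup>2 < d + inverse (real (Suc j))" for j
    unfolding d_def using l2_subspaceD(2)[OF S(1)]
    by (intro cINF_less_iff[THEN iffD1]) (auto intro: bdd_belowI2[where m = 0])
  then obtain s where s: "\<And>j. s j \<in> S"
    and sd: "\<And>j. (l2_dist G a (s j))\<^sup>2 < d + inverse (real (Suc j))"
    by metis
  have sl: "s j \<in> l2 G" for j using s l2_subspaceD(1)[OF S(1)] by blast
  obtain q where q: "q \<in> l2 G" and lim: "(\<lambda>j. l2_dist G (s j) q) \<longlonglongrightarrow> 0"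
    using l2_complete[OF sl l2_minimizing_sequence_Cauchy[OF S(1) a s d_le sd]] by blast
  have le: "l2_dist G a q \<le> sqrt (d + inverse (real (Suc j))) + l2_dist G (s j) q" for j
  proof -
    have "l2_dist G a (s j) \<le> sqrt (d + inverse (real (Suc j)))"
      using sd[of j] by (intro real_le_rsqrt) simp
    then show ?thesis using l2_dist_triangle[OF a sl q, of j] by linarith
  qed
  have "(\<lambda>j. sqrt (d + inverse (real (Suc j))) + l2_dist G (s j) q) \<longlonglongrightarrow> sqrt (d + 0) + 0"
    by (intro tendsto_intros lim LIMSEQ_inverse_real_of_nat)
  then have "l2_dist G a q \<le> sqrt (d + 0) + 0"
    by (rule LIMSEQ_le_const) (use le in blast)
  then have "l2_dist G a q \<le> l2_dist G a t" if "t \<in> S" for t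
    using real_sqrt_le_mono[OF d_le[OF that]] by (simp add: l2_norm_nonneg)
  then show ?thesis using l2_closedD[OF S(2) s q lim] by blast
qed

text \<open>With \<open>w = a - q\<close>, minimality of \<open>q\<close> makes the quadratic
  \<open>t \<mapsto> \<parallel>w - t x\<parallel>\<^sup>2 - \<parallel>w\<parallel>\<^sup>2\<close> nonnegative, which forces \<open>\<langle>w, x\<rangle> = 0\<close>.\<close>
lemma l2_closest_point_orthogonal:
  assumes S: "l2_subspace G S" and a: "a \<in> l2 G" and q: "q \<in> S"
    and min: "\<And>t. t \<in> S \<Longrightarrow> l2_dist G a q \<le> l2_dist G a t" and x: "x \<in> S"
  shows "l2_inner G (\<lambda>g. a g - q g) x = 0"
proof -
  note S = l2_subspaceD[OF S]
  define w where "w = (\<lambda>g. a g - q g)"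
  have w: "w \<in> l2 G" and xl: "x \<in> l2 G" using a q x S(1) by (auto simp: w_def intro: l2_diff)
  show ?thesis
  proof (cases "l2_norm G x = 0")
    case True
    then show ?thesis using l2_norm_eq_0[OF xl] by (simp add: l2_inner_def)
  next
    case False
    have "(cmod (l2_inner G w x))\<^sup>2 \<le> 0 * (l2_norm G x)\<^sup>2"
    proof (rule cauchy_schwarz_from_quadratic)
      show "0 < (l2_norm G x)\<^sup>2" using False by simp
      fix t
      have "(\<lambda>g. q g + t * x g) \<in> S" using q x S by blast
      then have "(l2_norm G w)\<^sup>2 \<le> (l2_dist G w (\<lambda>g. t * x g))\<^sup>2"
        using min[of "\<lambda>g. q g + t * x g"] by (simp add: w_def diff_diff_eq l2_norm_nonneg power_mono)
      also have "\<dots> = (l2_norm G w)\<^sup>2 + (cmod t * l2_norm G x)\<^sup>2 - 2 * Re (cnj t * l2_inner G w x)"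
        by (simp only: l2_dist_power2[OF w l2_scale[OF xl]] l2_norm_scale[OF xl] l2_inner_scale_right)
      finally show "0 \<le> 0 - 2 * Re (cnj t * l2_inner G w x) + (cmod t)\<^sup>2 * (l2_norm G x)\<^sup>2"
        by (simp add: power_mult_distrib)
    qed
    then show ?thesis by (simp add: w_def)
  qed
qed

lemma l2_orth_nonzero_if_not_dense:
  assumes M: "l2_subspace G M" and not_dense: "\<not> l2_dense G M"
  shows "\<exists>n\<in>l2_orth G M. n \<noteq> (\<lambda>g. 0)"
proof -
  from not_dense obtain f \<epsilon> where f: "f \<in> l2 G" and "\<epsilon> > 0"
    and far: "\<forall>s\<in>M. \<not> l2_dist G f s < \<epsilon>"
    unfolding l2_dense_def by blast
  define S where "S = l2_closure G M"
  have S: "l2_subspace G S" "l2_closed G S"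
    using l2_subspace_closure[OF M] l2_closed_closure[OF l2_subspaceD(1)[OF M]] by (simp_all add: S_def)
  obtain q where q: "q \<in> S" and min: "\<And>t. t \<in> S \<Longrightarrow> l2_dist G f q \<le> l2_dist G f t"
    using l2_closest_point_exists[OF S f] by blast
  have "q \<in> l2 G" using q l2_subspaceD(1)[OF S(1)] by blast
  then have "(\<lambda>g. f g - q g) \<in> l2_orth G S"
    using l2_closest_point_orthogonal[OF S(1) f q min] l2_diff[OF f] by (simp add: l2_orth_def)
  then have "(\<lambda>g. f g - q g) \<in> l2_orth G M"
    using l2_orth_antimono[OF subset_l2_closure[OF l2_subspaceD(1)[OF M]]] by (auto simp: S_def)
  moreover have "(\<lambda>g. f g - q g) \<noteq> (\<lambda>g. 0)"
  proof
    assume "(\<lambda>g. f g - q g) = (\<lambda>g. 0)"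
    then have "f = q" by (simp add: fun_eq_iff)
    then have "f \<in> l2_closure G M" using q by (simp add: S_def)
    then show False using l2_closureD[OF _ \<open>\<epsilon> > 0\<close>] far by blast
  qed
  ultimately show ?thesis by blast
qed
locale l2_closed_subspace =
  fixes G :: "('g, 'b) monoid_scheme" and S :: "('g \<Rightarrow> complex) set"
  assumes subspace: "l2_subspace G S" and closed: "l2_closed G S"
begin

definition proj :: "('g \<Rightarrow> complex) \<Rightarrow> 'g \<Rightarrow> complex" where
  "proj a = (SOME p. p \<in> S \<and> (\<forall>s\<in>S. l2_inner G (\<lambda>g. a g - p g) s = 0))"

lemma subset_l2: "S \<subseteq> l2 G"
  using l2_subspaceD(1)[OF subspace] .

lemma proj_in: "a \<in> l2 G \<Longrightarrow> proj a \<in> S"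
  and proj_orth: "a \<in> l2 G \<Longrightarrow> s \<in> S \<Longrightarrow> l2_inner G (\<lambda>g. a g - proj a g) s = 0"
proof -
  assume a: "a \<in> l2 G"
  obtain q where "q \<in> S" "\<And>t. t \<in> S \<Longrightarrow> l2_dist G a q \<le> l2_dist G a t"
    using l2_closest_point_exists[OF subspace closed a] by blast
  then have "\<exists>p. p \<in> S \<and> (\<forall>s\<in>S. l2_inner G (\<lambda>g. a g - p g) s = 0)"
    using l2_closest_point_orthogonal[OF subspace a] by blast
  then have "proj a \<in> S \<and> (\<forall>s\<in>S. l2_inner G (\<lambda>g. a g - proj a g) s = 0)"
    unfolding proj_def by (rule someI_ex)
  then show "proj a \<in> S" "s \<in> S \<Longrightarrow> l2_inner G (\<lambda>g. a g - proj a g) s = 0" by auto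
qed

lemma proj_l2: "a \<in> l2 G \<Longrightarrow> proj a \<in> l2 G"
  using proj_in subset_l2 by blast

lemma proj_unique:
  assumes a: "a \<in> l2 G" and p: "p \<in> S" and orth: "\<And>s. s \<in> S \<Longrightarrow> l2_inner G (\<lambda>g. a g - p g) s = 0"
  shows "proj a = p"
proof -
  note S = l2_subspaceD[OF subspace]
  define d where "d = (\<lambda>g. proj a g - p g)"
  have d: "d \<in> S" using S(3)[OF proj_in[OF a] S(4)[OF p, of "-1"]] by (simp add: d_def)
  have pl: "p \<in> l2 G" and dl: "d \<in> l2 G" using p d subset_l2 by auto
  have "(\<lambda>g. (a g - p g) - (a g - proj a g)) = d" by (auto simp: d_def)
  then have "l2_inner G d d = l2_inner G (\<lambda>g. a g - p g) d - l2_inner G (\<lambda>g. a g - proj a g) d"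
    using l2_inner_diff_left[OF l2_diff[OF a pl] l2_diff[OF a proj_l2[OF a]] dl] by simp
  also have "\<dots> = 0" using orth[OF d] proj_orth[OF a d] by simp
  finally have "d = (\<lambda>g. 0)" using l2_inner_self[OF dl] l2_norm_eq_0[OF dl] by simp
  then show ?thesis by (auto simp: d_def fun_eq_iff)
qed

lemma proj_fixed: "n \<in> S \<Longrightarrow> proj n = n"
  using proj_unique subset_l2 by (auto simp: l2_inner_def)

lemma proj_scale: "a \<in> l2 G \<Longrightarrow> proj (\<lambda>g. c * a g) = (\<lambda>g. c * proj a g)"
  using l2_scale proj_in proj_orth l2_subspaceD(4)[OF subspace]
  by (intro proj_unique) (auto simp: l2_inner_scale_left right_diff_distrib[symmetric])

lemma proj_self_adjoint:
  assumes a: "a \<in> l2 G" and b: "b \<in> l2 G"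
  shows "l2_inner G (proj a) b = l2_inner G a (proj b)"
proof -
  have "l2_inner G (proj a) b = l2_inner G (proj a) (proj b)"
    using l2_inner_diff_right[OF proj_l2[OF a] b proj_l2[OF b]] proj_orth[OF b proj_in[OF a]]
    by (subst (asm) l2_inner_commute) simp
  also have "\<dots> = l2_inner G a (proj b)"
    using l2_inner_diff_left[OF a proj_l2[OF a] proj_l2[OF b]] proj_orth[OF a proj_in[OF b]] by simp
  finally show ?thesis .
qed

end

section \<open>Analysis and synthesis operators\<close>

lemma dist_sum_sq_le:
  fixes f :: "'a \<Rightarrow> 'b::real_normed_vector" and w :: "'a \<Rightarrow> real"
  assumes bound: "\<And>F. finite F \<Longrightarrow> F \<subseteq> A \<Longrightarrow> (norm (sum f F))\<^sup>2 \<le> B * sum w F"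
    and "finite F" "F \<subseteq> A" "F' \<subseteq> F"
  shows "(dist (sum f F) (sum f F'))\<^sup>2 \<le> B * (sum w F - sum w F')"
proof -
  have "dist (sum f F) (sum f F') = norm (sum f (F - F'))"
    using assms by (simp add: dist_norm sum_diff finite_subset)
  moreover have "sum w (F - F') = sum w F - sum w F'"
    using assms by (simp add: sum_diff finite_subset)
  ultimately show ?thesis using bound[of "F - F'"] assms by auto
qed

lemma cauchy_filter_sum_sq_comparison:
  fixes f :: "'a \<Rightarrow> 'b::real_normed_vector" and w :: "'a \<Rightarrow> real"
  assumes w: "w summable_on A" and "B \<ge> 0"
    and bound: "\<And>F. finite F \<Longrightarrow> F \<subseteq> A \<Longrightarrow> (norm (sum f F))\<^sup>2 \<le> B * sum w F"
  shows "cauchy_filter (filtermap (sum f) (finite_subsets_at_top A))"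
proof -
  from w obtain L where lim: "(sum w \<longlongrightarrow> L) (finite_subsets_at_top A)"
    unfolding has_sum_def summable_on_def by blast
  have "\<exists>P. eventually P (finite_subsets_at_top A) \<and>
      (\<forall>F F'. P F \<and> P F' \<longrightarrow> dist (sum f F) (sum f F') < e)" if "e > 0" for e
  proof -
    define d where "d = e\<^sup>2 / (8 * (B + 1))"
    define P where "P F \<longleftrightarrow> finite F \<and> F \<subseteq> A \<and> dist (sum w F) L < d" for F
    have "d > 0" using \<open>e > 0\<close> \<open>B \<ge> 0\<close> by (simp add: d_def)
    then have ev: "eventually P (finite_subsets_at_top A)"
      using lim by (auto simp: P_def[abs_def] eventually_conj_iff eventually_finite_subsets_at_top_weakI
          tendsto_iff)
    then obtain F0 where F0: "finite F0" "F0 \<subseteq> A" "\<And>F. finite F \<and> F0 \<subseteq> F \<and> F \<subseteq> A \<Longrightarrow> P F"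
      by (auto simp: eventually_finite_subsets_at_top)
    have "dist (sum f F1) (sum f F2) < e" if "P F1" "P F2" for F1 F2
    proof -
      define F where "F = F0 \<union> F1 \<union> F2"
      have F: "finite F" "F \<subseteq> A" using F0 that by (auto simp: F_def P_def)
      then have "P F" by (intro F0(3)) (auto simp: F_def)
      have close: "dist (sum f F) (sum f F') < e / 2" if "F' \<subseteq> F" "P F'" for F'
      proof -
        have "(dist (sum f F) (sum f F'))\<^sup>2 \<le> B * (2 * d)"
          using dist_sum_sq_le[OF bound F \<open>F' \<subseteq> F\<close>] \<open>P F\<close> \<open>P F'\<close> \<open>B \<ge> 0\<close>
          unfolding P_def dist_real_def by (smt (verit, best) mult_left_mono)
        also have "\<dots> < (e / 2)\<^sup>2"
          using \<open>e > 0\<close> \<open>B \<ge> 0\<close> by (simp add: d_def field_simps power2_eq_square)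
        finally show ?thesis by (rule power2_less_imp_less) (use \<open>e > 0\<close> in simp)
      qed
      have "dist (sum f F1) (sum f F2) \<le> dist (sum f F) (sum f F1) + dist (sum f F) (sum f F2)"
        by (rule dist_triangle3)
      also have "\<dots> < e / 2 + e / 2"
        using that by (intro add_strict_mono close) (auto simp: F_def)
      finally show ?thesis by simp
    qed
    with ev show ?thesis by blast
  qed
  then show ?thesis by (simp add: cauchy_filter_metric_filtermap)
qed

lemma summable_on_sq_comparison:
  fixes f :: "'a \<Rightarrow> 'b::{real_normed_vector, complete_space}" and w :: "'a \<Rightarrow> real"
  assumes "w summable_on A" and "B \<ge> 0"
    and "\<And>F. finite F \<Longrightarrow> F \<subseteq> A \<Longrightarrow> (norm (sum f F))\<^sup>2 \<le> B * sum w F"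
  shows "f summable_on A"
proof -
  obtain L where "(sum f \<longlongrightarrow> L) (finite_subsets_at_top A)"
    using complete_uniform[where S = UNIV] complete_UNIV cauchy_filter_sum_sq_comparison[OF assms]
    by (force simp: filterlim_def)
  then show ?thesis
    unfolding summable_on_def has_sum_def by blast
qed

lemma analysis_op_l2_iff: "analysis_op G \<pi> v y \<in> l2 G \<longleftrightarrow> y \<in> analysis_domain G \<pi> v"
proof -
  have "(\<lambda>g. (cmod (analysis_op G \<pi> v y g))\<^sup>2) summable_on carrier G \<longleftrightarrow>
        (\<lambda>g. (cmod (cinner y (\<pi> g v)))\<^sup>2) summable_on carrier G"
    by (rule summable_on_cong) (simp add: analysis_op_def)
  then show ?thesis by (simp add: l2_def analysis_domain_def analysis_op_def)
qed

lemma analysis_range_memI: "analysis_op G \<pi> v y \<in> l2 G \<Longrightarrow> analysis_op G \<pi> v y \<in> analysis_range G \<pi> v"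
  by (simp add: analysis_range_def analysis_op_l2_iff)

lemma analysis_rangeE:
  assumes "b \<in> analysis_range G \<pi> v"
  obtains y where "b = analysis_op G \<pi> v y" and "b \<in> l2 G"
  using assms by (auto simp: analysis_range_def analysis_op_l2_iff)

lemma l2_subspace_analysis_range: "l2_subspace G (analysis_range G \<pi> v)"
proof -
  have "analysis_op G \<pi> v 0 = (\<lambda>g. 0)" by (simp add: analysis_op_def fun_eq_iff)
  then have "(\<lambda>g. 0) \<in> analysis_range G \<pi> v"
    using analysis_range_memI[of G \<pi> v 0] l2_zero[of G] by simp
  moreover have "(\<lambda>g. a g + b g) \<in> analysis_range G \<pi> v"
    if a: "a \<in> analysis_range G \<pi> v" and b: "b \<in> analysis_range G \<pi> v" for a b
  proof -
    obtain y where y: "a = analysis_op G \<pi> v y" "a \<in> l2 G" using a by (rule analysis_rangeE)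
    obtain z where z: "b = analysis_op G \<pi> v z" "b \<in> l2 G" using b by (rule analysis_rangeE)
    have "analysis_op G \<pi> v (y + z) = (\<lambda>g. a g + b g)"
      by (auto simp: y z analysis_op_def cinner_add_left)
    then show ?thesis
      using analysis_range_memI[of G \<pi> v "y + z"] l2_add[OF y(2) z(2)] by simp
  qed
  moreover have "(\<lambda>g. c * a g) \<in> analysis_range G \<pi> v" if a: "a \<in> analysis_range G \<pi> v" for c a
  proof -
    obtain y where y: "a = analysis_op G \<pi> v y" "a \<in> l2 G" using a by (rule analysis_rangeE)
    have "analysis_op G \<pi> v (c *\<^sub>C y) = (\<lambda>g. c * a g)"
      by (auto simp: y analysis_op_def cinner_scaleC_left)
    then show ?thesis
      using analysis_range_memI[of G \<pi> v "c *\<^sub>C y"] l2_scale[OF y(2)] by simp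
  qed
  moreover have "analysis_range G \<pi> v \<subseteq> l2 G" by (auto elim: analysis_rangeE)
  ultimately show ?thesis unfolding l2_subspace_def by blast
qed

lemma riesz_vector_lower_bound:
  assumes "riesz_vector G \<pi> \<eta>"
  obtains A where "0 < A"
    and "\<And>c F. finite F \<Longrightarrow> F \<subseteq> carrier G \<Longrightarrow>
           A * (\<Sum>g\<in>F. (cmod (c g))\<^sup>2) \<le> (norm (\<Sum>g\<in>F. c g *\<^sub>C \<pi> g \<eta>))\<^sup>2"
  using assms unfolding riesz_vector_def by blast

lemma riesz_vector_upper_bound:
  assumes "riesz_vector G \<pi> \<eta>"
  obtains B where "0 < B"
    and "\<And>c F. finite F \<Longrightarrow> F \<subseteq> carrier G \<Longrightarrow>
           (norm (\<Sum>g\<in>F. c g *\<^sub>C \<pi> g \<eta>))\<^sup>2 \<le> B * (\<Sum>g\<in>F. (cmod (c g))\<^sup>2)"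
  using assms unfolding riesz_vector_def by blast

text \<open>Testing the synthesis bound against the coefficients \<open>\<langle>y, v g\<rangle>\<close> themselves gives the
  dual (Bessel) bound.\<close>
lemma bessel_bound_of_synthesis_bound:
  fixes v :: "'a \<Rightarrow> 'h::complex_inner"
  assumes "0 \<le> B"
    and synth: "(norm (\<Sum>g\<in>F. cinner y (v g) *\<^sub>C v g))\<^sup>2 \<le> B * (\<Sum>g\<in>F. (cmod (cinner y (v g)))\<^sup>2)"
  shows "(\<Sum>g\<in>F. (cmod (cinner y (v g)))\<^sup>2) \<le> B * (norm y)\<^sup>2"
proof -
  define S where "S = (\<Sum>g\<in>F. (cmod (cinner y (v g)))\<^sup>2)"
  define w where "w = (\<Sum>g\<in>F. cinner y (v g) *\<^sub>C v g)"
  have "S \<ge> 0" unfolding S_def by (intro sum_nonneg) simp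
  have "cinner y w = complex_of_real S"
    by (simp add: S_def w_def cinner_sum_right cinner_scaleC_right cnj_mult_self)
  then have "S \<le> norm y * norm w"
    using cauchy_schwarz_cinner[of y w] \<open>S \<ge> 0\<close> by simp
  then have "S\<^sup>2 \<le> (norm y * norm w)\<^sup>2"
    using \<open>S \<ge> 0\<close> by (rule power_mono)
  also have "\<dots> = (norm y)\<^sup>2 * (norm w)\<^sup>2"
    by (rule power_mult_distrib)
  also have "\<dots> \<le> (norm y)\<^sup>2 * (B * S)"
    using synth by (intro mult_left_mono) (simp_all add: S_def w_def)
  finally have "S * S \<le> S * (B * (norm y)\<^sup>2)"
    by (simp add: power2_eq_square algebra_simps)
  then show ?thesis
    using \<open>S \<ge> 0\<close> \<open>0 \<le> B\<close> by (cases "S = 0") (simp_all add: S_def mult_le_cancel_left_pos)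
qed

lemma analysis_op_l2_if_riesz:
  assumes "riesz_vector G \<pi> \<eta>"
  shows "analysis_op G \<pi> \<eta> y \<in> l2 G"
proof -
  obtain B where "0 < B" and synth: "\<And>c F. finite F \<Longrightarrow> F \<subseteq> carrier G \<Longrightarrow>
      (norm (\<Sum>g\<in>F. c g *\<^sub>C \<pi> g \<eta>))\<^sup>2 \<le> B * (\<Sum>g\<in>F. (cmod (c g))\<^sup>2)"
    using riesz_vector_upper_bound[OF assms] by blast
  show ?thesis
  proof (rule l2_memI_finite_sums(1))
    fix F assume F: "finite F" "F \<subseteq> carrier G"
    have "(\<Sum>g\<in>F. (cmod (cinner y (\<pi> g \<eta>)))\<^sup>2) \<le> B * (norm y)\<^sup>2"
      using \<open>0 < B\<close> synth[OF F] by (intro bessel_bound_of_synthesis_bound) auto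
    moreover have "(\<Sum>g\<in>F. (cmod (analysis_op G \<pi> \<eta> y g))\<^sup>2) = (\<Sum>g\<in>F. (cmod (cinner y (\<pi> g \<eta>)))\<^sup>2)"
      using F by (intro sum.cong) (auto simp: analysis_op_def)
    ultimately show "(\<Sum>g\<in>F. (cmod (analysis_op G \<pi> \<eta> y g))\<^sup>2) \<le> B * (norm y)\<^sup>2" by simp
  qed (simp add: analysis_op_def)
qed

lemma synthesis_summable_if_riesz:
  fixes \<pi> :: "'g \<Rightarrow> 'h::{complex_inner, complete_space} \<Rightarrow> 'h"
  assumes "riesz_vector G \<pi> \<eta>" and "c \<in> l2 G"
  shows "(\<lambda>k. c k *\<^sub>C \<pi> k \<eta>) summable_on carrier G"
proof -
  obtain B where "0 < B" and bound: "\<And>c F. finite F \<Longrightarrow> F \<subseteq> carrier G \<Longrightarrow>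
      (norm (\<Sum>g\<in>F. c g *\<^sub>C \<pi> g \<eta>))\<^sup>2 \<le> B * (\<Sum>g\<in>F. (cmod (c g))\<^sup>2)"
    using riesz_vector_upper_bound[OF assms(1)] by blast
  show ?thesis
  proof (rule summable_on_sq_comparison[where B = B, OF l2_summable[OF assms(2)]])
    show "(norm (\<Sum>k\<in>F. c k *\<^sub>C \<pi> k \<eta>))\<^sup>2 \<le> B * (\<Sum>k\<in>F. (cmod (c k))\<^sup>2)"
      if "finite F" "F \<subseteq> carrier G" for F
      using bound[OF that] .
  qed (use \<open>0 < B\<close> in simp)
qed

lemma synthesis_nonzero_if_riesz:
  fixes \<pi> :: "'g \<Rightarrow> 'h::{complex_inner, complete_space} \<Rightarrow> 'h"
  assumes riesz: "riesz_vector G \<pi> \<eta>" and c: "c \<in> l2 G" "c \<noteq> (\<lambda>g. 0)"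
  shows "(\<Sum>\<^sub>\<infinity>k\<in>carrier G. c k *\<^sub>C \<pi> k \<eta>) \<noteq> 0"
proof -
  obtain A where "0 < A" and lower: "\<And>c F. finite F \<Longrightarrow> F \<subseteq> carrier G \<Longrightarrow>
      A * (\<Sum>g\<in>F. (cmod (c g))\<^sup>2) \<le> (norm (\<Sum>g\<in>F. c g *\<^sub>C \<pi> g \<eta>))\<^sup>2"
    using riesz_vector_lower_bound[OF riesz] by blast
  define x where "x = (\<Sum>\<^sub>\<infinity>k\<in>carrier G. c k *\<^sub>C \<pi> k \<eta>)"
  have "((\<lambda>k. c k *\<^sub>C \<pi> k \<eta>) has_sum x) (carrier G)"
    unfolding x_def by (rule has_sum_infsum[OF synthesis_summable_if_riesz[OF riesz c(1)]])
  then have synth: "((\<lambda>F. (norm (\<Sum>k\<in>F. c k *\<^sub>C \<pi> k \<eta>))\<^sup>2) \<longlongrightarrow> (norm x)\<^sup>2)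
      (finite_subsets_at_top (carrier G))"
    unfolding has_sum_def by (intro tendsto_intros)
  have "((\<lambda>k. (cmod (c k))\<^sup>2) has_sum (l2_norm G c)\<^sup>2) (carrier G)"
    using has_sum_infsum[OF l2_summable[OF c(1)]] by (simp add: l2_norm_power2)
  then have coeff: "((\<lambda>F. A * (\<Sum>k\<in>F. (cmod (c k))\<^sup>2)) \<longlongrightarrow> A * (l2_norm G c)\<^sup>2)
      (finite_subsets_at_top (carrier G))"
    unfolding has_sum_def by (intro tendsto_intros)
  have "A * (l2_norm G c)\<^sup>2 \<le> (norm x)\<^sup>2"
    by (rule tendsto_le[OF _ synth coeff]) (auto intro: lower)
  moreover have "l2_norm G c \<noteq> 0" using l2_norm_eq_0[OF c(1)] c(2) by blast
  then have "0 < A * (l2_norm G c)\<^sup>2" using \<open>0 < A\<close> by simp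
  ultimately show ?thesis by (auto simp: x_def)
qed
section \<open>Twisted translations on \<open>\<ell>\<^sup>2(G)\<close>\<close>

locale projective_rep = group G for G :: "('g, 'b) monoid_scheme" (structure) +
  fixes \<pi> :: "'g \<Rightarrow> 'h::{complex_inner, complete_space} \<Rightarrow> 'h" and \<mu> :: "'g \<Rightarrow> 'g \<Rightarrow> complex"
  assumes unitary: "g \<in> carrier G \<Longrightarrow> cunitary (\<pi> g)"
    and multiplier_norm: "g \<in> carrier G \<Longrightarrow> h \<in> carrier G \<Longrightarrow> cmod (\<mu> g h) = 1"
    and multiplier: "g \<in> carrier G \<Longrightarrow> h \<in> carrier G \<Longrightarrow> \<pi> g (\<pi> h x) = \<mu> g h *\<^sub>C \<pi> (g \<otimes>\<^bsub>G\<^esub> h) x"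
begin

lemma cnj_multiplier_mult: "g \<in> carrier G \<Longrightarrow> h \<in> carrier G \<Longrightarrow> cnj (\<mu> g h) * \<mu> g h = 1"
  by (simp add: cnj_mult_self multiplier_norm)

lemma bij_betw_mult_left: "h \<in> carrier G \<Longrightarrow> bij_betw (\<lambda>g. h \<otimes> g) (carrier G) (carrier G)"
  by (rule bij_betw_byWitness[where f' = "\<lambda>g. inv h \<otimes> g"]) (auto simp: m_assoc[symmetric])

text \<open>\<open>twisted_shift h\<close> is the \<open>\<mu>\<close>-twisted left regular representation \<open>\<lambda>\<^sub>h\<close>, and
  \<open>twisted_shift_adj h\<close> is its inverse and adjoint.\<close>
definition twisted_shift :: "'g \<Rightarrow> ('g \<Rightarrow> complex) \<Rightarrow> 'g \<Rightarrow> complex" where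
  "twisted_shift h f = (\<lambda>g. if g \<in> carrier G then \<mu> h (inv h \<otimes> g) * f (inv h \<otimes> g) else 0)"

definition twisted_shift_adj :: "'g \<Rightarrow> ('g \<Rightarrow> complex) \<Rightarrow> 'g \<Rightarrow> complex" where
  "twisted_shift_adj h f = (\<lambda>g. if g \<in> carrier G then cnj (\<mu> h g) * f (h \<otimes> g) else 0)"

lemma l2_twisted_shift:
  assumes h: "h \<in> carrier G" and f: "f \<in> l2 G"
  shows "twisted_shift h f \<in> l2 G"
proof -
  have "(\<lambda>g. (cmod (f (inv h \<otimes> g)))\<^sup>2) summable_on carrier G"
    using summable_on_reindex_bij_betw[OF bij_betw_mult_left[OF inv_closed[OF h]], of "\<lambda>g. (cmod (f g))\<^sup>2"]
      l2_summable[OF f]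
    by simp
  then have "(\<lambda>g. (cmod (twisted_shift h f g))\<^sup>2) summable_on carrier G"
    by (rule summable_on_cong[THEN iffD1, rotated])
       (simp add: twisted_shift_def norm_mult multiplier_norm h)
  then show ?thesis by (simp add: l2_def twisted_shift_def)
qed

lemma l2_twisted_shift_adj:
  assumes h: "h \<in> carrier G" and f: "f \<in> l2 G"
  shows "twisted_shift_adj h f \<in> l2 G"
proof -
  have "(\<lambda>g. (cmod (f (h \<otimes> g)))\<^sup>2) summable_on carrier G"
    using summable_on_reindex_bij_betw[OF bij_betw_mult_left[OF h], of "\<lambda>g. (cmod (f g))\<^sup>2"]
      l2_summable[OF f] by simp
  then have "(\<lambda>g. (cmod (twisted_shift_adj h f g))\<^sup>2) summable_on carrier G"
    by (rule summable_on_cong[THEN iffD1, rotated])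
       (simp add: twisted_shift_adj_def norm_mult multiplier_norm h)
  then show ?thesis by (simp add: l2_def twisted_shift_adj_def)
qed

lemma l2_inner_twisted_shift_adj:
  assumes h: "h \<in> carrier G"
  shows "l2_inner G (twisted_shift_adj h f) k = l2_inner G f (twisted_shift h k)"
proof -
  have "l2_inner G f (twisted_shift h k) =
      (\<Sum>\<^sub>\<infinity>g\<in>carrier G. f (h \<otimes> g) * cnj (twisted_shift h k (h \<otimes> g)))"
    unfolding l2_inner_def by (rule infsum_reindex_bij_betw[OF bij_betw_mult_left[OF h], symmetric])
  also have "\<dots> = l2_inner G (twisted_shift_adj h f) k"
    unfolding l2_inner_def
    by (rule infsum_cong) (simp add: twisted_shift_def twisted_shift_adj_def h m_assoc[symmetric])
  finally show ?thesis ..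
qed

lemma l2_inner_twisted_shift:
  "h \<in> carrier G \<Longrightarrow> l2_inner G (twisted_shift h f) k = l2_inner G f (twisted_shift_adj h k)"
  by (subst (1 2) l2_inner_commute) (simp add: l2_inner_twisted_shift_adj)

lemma analysis_op_unitary:
  assumes h: "h \<in> carrier G"
  shows "analysis_op G \<pi> v (\<pi> h y) = twisted_shift h (analysis_op G \<pi> v y)"
proof
  fix g
  show "analysis_op G \<pi> v (\<pi> h y) g = twisted_shift h (analysis_op G \<pi> v y) g"
  proof (cases "g \<in> carrier G")
    case g: True
    define k where "k = inv h \<otimes> g"
    have k: "k \<in> carrier G" and hk: "h \<otimes> k = g" using h g by (simp_all add: k_def m_assoc[symmetric])
    have "cnj (\<mu> h k) *\<^sub>C \<pi> h (\<pi> k v) = \<pi> g v"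
      using multiplier[OF h k] hk by (simp add: scaleC_scaleC cnj_multiplier_mult[OF h k] scaleC_one)
    then have "cinner (\<pi> h y) (\<pi> g v) = \<mu> h k * cinner (\<pi> h y) (\<pi> h (\<pi> k v))"
      by (metis cinner_scaleC_right complex_cnj_cnj)
    also have "\<dots> = \<mu> h k * cinner y (\<pi> k v)" by (simp add: cunitary_cinner unitary h)
    finally show ?thesis using g k by (simp add: analysis_op_def twisted_shift_def k_def)
  qed (simp add: analysis_op_def twisted_shift_def)
qed

lemma analysis_op_unitary_inv:
  assumes h: "h \<in> carrier G"
  shows "analysis_op G \<pi> v y = twisted_shift_adj h (analysis_op G \<pi> v (\<pi> h y))"
proof
  fix g
  show "analysis_op G \<pi> v y g = twisted_shift_adj h (analysis_op G \<pi> v (\<pi> h y)) g"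
  proof (cases "g \<in> carrier G")
    case g: True
    have "cinner y (\<pi> g v) = cinner (\<pi> h y) (\<pi> h (\<pi> g v))" by (simp add: cunitary_cinner unitary h)
    also have "\<dots> = cnj (\<mu> h g) * cinner (\<pi> h y) (\<pi> (h \<otimes> g) v)"
      by (simp add: multiplier[OF h g] cinner_scaleC_right)
    finally show ?thesis using g h by (simp add: analysis_op_def twisted_shift_adj_def)
  qed (simp add: analysis_op_def twisted_shift_adj_def)
qed

lemma analysis_range_twisted_shift:
  assumes h: "h \<in> carrier G" and b: "b \<in> analysis_range G \<pi> v"
  shows "twisted_shift h b \<in> analysis_range G \<pi> v"
proof -
  obtain y where y: "b = analysis_op G \<pi> v y" "b \<in> l2 G" using b by (rule analysis_rangeE)
  then show ?thesis
    using analysis_range_memI[of G \<pi> v "\<pi> h y"] l2_twisted_shift[OF h y(2)]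
    by (simp add: analysis_op_unitary[OF h])
qed

lemma analysis_range_twisted_shift_adj:
  assumes h: "h \<in> carrier G" and b: "b \<in> analysis_range G \<pi> v"
  shows "twisted_shift_adj h b \<in> analysis_range G \<pi> v"
proof -
  obtain y where y: "b = analysis_op G \<pi> v y" "b \<in> l2 G" using b by (rule analysis_rangeE)
  obtain w where w: "\<pi> h w = y" using cunitary_def unitary[OF h] by (metis surjD)
  show ?thesis
    using analysis_range_memI[of G \<pi> v w] l2_twisted_shift_adj[OF h y(2)]
    by (simp add: y analysis_op_unitary_inv[OF h, of v w] w)
qed

lemma l2_orth_twisted_shift:
  assumes "\<And>b. b \<in> M \<Longrightarrow> twisted_shift_adj h b \<in> M" and h: "h \<in> carrier G" and n: "n \<in> l2_orth G M"
  shows "twisted_shift h n \<in> l2_orth G M"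
  using assms l2_twisted_shift[OF h] by (auto simp: l2_orth_def l2_inner_twisted_shift)

lemma l2_orth_twisted_shift_adj:
  assumes "\<And>b. b \<in> M \<Longrightarrow> twisted_shift h b \<in> M" and h: "h \<in> carrier G" and n: "n \<in> l2_orth G M"
  shows "twisted_shift_adj h n \<in> l2_orth G M"
  using assms l2_twisted_shift_adj[OF h] by (auto simp: l2_orth_def l2_inner_twisted_shift_adj)

lemma multiplier_right_one:
  fixes x :: 'h
  assumes x: "x \<noteq> 0" and g: "g \<in> carrier G"
  shows "\<mu> g \<one> = \<mu> \<one> \<one>"
proof -
  have \<pi>_one: "\<pi> \<one> v = \<mu> \<one> \<one> *\<^sub>C v" for v
  proof -
    have "\<pi> \<one> (\<pi> \<one> v) = \<pi> \<one> (\<mu> \<one> \<one> *\<^sub>C v)"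
      using multiplier[of \<one> \<one> v] by (simp add: cunitary_scaleC unitary)
    then show ?thesis using cunitary_inj[OF unitary[OF one_closed]] by (simp add: inj_eq)
  qed
  have "\<mu> g \<one> *\<^sub>C \<pi> g x = \<mu> \<one> \<one> *\<^sub>C \<pi> g x"
    using multiplier[OF g one_closed, of x] g by (simp add: \<pi>_one cunitary_scaleC unitary)
  then have "(\<mu> g \<one> - \<mu> \<one> \<one>) *\<^sub>C \<pi> g x = 0"
    by (simp add: scaleC_diff_left)
  moreover have "\<pi> g x \<noteq> 0" using x cunitary_norm[OF unitary[OF g], of x] by auto
  ultimately show ?thesis by (simp add: scaleC_eq_0_iff)
qed

lemma indicator_twisted_shift:
  assumes h: "h \<in> carrier G"
  shows "indicator {h} = (\<lambda>g. cnj (\<mu> h \<one>) * twisted_shift h (indicator {\<one>}) g)"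
proof
  fix g
  have "inv h \<otimes> g = \<one> \<longleftrightarrow> g = h" if "g \<in> carrier G"
    using h that by (metis inv_closed inv_equality l_inv inv_inv)
  then show "indicator {h} g = cnj (\<mu> h \<one>) * twisted_shift h (indicator {\<one>}) g"
    using h cnj_multiplier_mult[OF h one_closed]
    by (auto simp: twisted_shift_def indicator_def mult.assoc[symmetric])
qed

lemma cinner_synthesis:
  assumes riesz: "riesz_vector G \<pi> \<eta>" and p: "p \<in> l2 G" and g: "g \<in> carrier G"
  shows "cinner y (\<pi> g (\<Sum>\<^sub>\<infinity>k\<in>carrier G. p k *\<^sub>C \<pi> k \<eta>)) =
    l2_inner G (analysis_op G \<pi> \<eta> y) (twisted_shift g p)"
proof -
  define f where "f = (\<lambda>k. p k *\<^sub>C \<pi> k \<eta>)"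
  have f: "f summable_on carrier G" unfolding f_def by (rule synthesis_summable_if_riesz[OF riesz p])
  have lin: "bounded_linear (\<pi> g)" by (rule cunitary_bounded_linear[OF unitary[OF g]])
  have "cinner (\<pi> g (infsum f (carrier G))) y = (\<Sum>\<^sub>\<infinity>k\<in>carrier G. cinner (\<pi> g (f k)) y)"
    by (rule infsumI[symmetric, OF has_sum_bounded_linear[OF bounded_linear_cinner_left
          has_sum_bounded_linear[OF lin has_sum_infsum[OF f]]]])
  also have "\<dots> = (\<Sum>\<^sub>\<infinity>k\<in>carrier G. p k * \<mu> g k * cinner (\<pi> (g \<otimes> k) \<eta>) y)"
    by (rule infsum_cong)
       (simp add: f_def cunitary_scaleC unitary g multiplier[OF g] scaleC_scaleC cinner_scaleC_left)
  finally have "cinner y (\<pi> g (infsum f (carrier G))) =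
      (\<Sum>\<^sub>\<infinity>k\<in>carrier G. cnj (p k * \<mu> g k) * cinner y (\<pi> (g \<otimes> k) \<eta>))"
    by (subst cinner_commute) (simp flip: infsum_cnj add: cinner_commute[of y])
  also have "\<dots> = (\<Sum>\<^sub>\<infinity>k\<in>carrier G. analysis_op G \<pi> \<eta> y (g \<otimes> k) * cnj (twisted_shift g p (g \<otimes> k)))"
    by (rule infsum_cong) (simp add: g analysis_op_def twisted_shift_def m_assoc[symmetric] mult.commute)
  also have "\<dots> = l2_inner G (analysis_op G \<pi> \<eta> y) (twisted_shift g p)"
    unfolding l2_inner_def
    by (rule infsum_reindex_bij_betw[OF bij_betw_mult_left[OF g],
          where f = "\<lambda>m. analysis_op G \<pi> \<eta> y m * cnj (twisted_shift g p m)"])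
  finally show ?thesis by (simp add: f_def)
qed

end
locale twisted_invariant_subspace = projective_rep G \<pi> \<mu> + l2_closed_subspace G N
  for G :: "('g, 'b) monoid_scheme" (structure) and \<pi> :: "'g \<Rightarrow> 'h::{complex_inner, complete_space} \<Rightarrow> 'h"
    and \<mu> and N +
  assumes twisted_shift_closed: "h \<in> carrier G \<Longrightarrow> n \<in> N \<Longrightarrow> twisted_shift h n \<in> N"
    and twisted_shift_adj_closed: "h \<in> carrier G \<Longrightarrow> n \<in> N \<Longrightarrow> twisted_shift_adj h n \<in> N"
begin

lemma proj_twisted_shift:
  assumes h: "h \<in> carrier G" and a: "a \<in> l2 G"
  shows "proj (twisted_shift h a) = twisted_shift h (proj a)"
proof (rule proj_unique[OF l2_twisted_shift[OF h a] twisted_shift_closed[OF h proj_in[OF a]]])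
  fix n assume "n \<in> N"
  have "(\<lambda>g. twisted_shift h a g - twisted_shift h (proj a) g) = twisted_shift h (\<lambda>g. a g - proj a g)"
    by (auto simp: twisted_shift_def algebra_simps)
  then show "l2_inner G (\<lambda>g. twisted_shift h a g - twisted_shift h (proj a) g) n = 0"
    using proj_orth[OF a twisted_shift_adj_closed[OF h \<open>n \<in> N\<close>]] by (simp add: l2_inner_twisted_shift[OF h])
qed

lemma proj_apply:
  assumes a: "a \<in> l2 G" and g: "g \<in> carrier G"
  shows "proj a g = \<mu> g \<one> * l2_inner G a (twisted_shift g (proj (indicator {\<one>})))"
proof -
  have "proj a g = l2_inner G (proj a) (indicator {g})"
    by (rule l2_inner_indicator[OF g, symmetric])
  also have "\<dots> = l2_inner G a (proj (indicator {g}))"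
    by (rule proj_self_adjoint[OF a l2_indicator[OF g]])
  also have "proj (indicator {g}) = (\<lambda>m. cnj (\<mu> g \<one>) * twisted_shift g (proj (indicator {\<one>})) m)"
    using indicator_twisted_shift[OF g] l2_indicator[OF one_closed]
    by (simp add: proj_scale l2_twisted_shift g proj_twisted_shift)
  finally show ?thesis by (simp add: l2_inner_scale_right)
qed

lemma proj_indicator_nonzero:
  assumes "n \<in> N" and "n \<noteq> (\<lambda>g. 0)"
  shows "proj (indicator {\<one>}) \<noteq> (\<lambda>g. 0)"
proof
  assume p: "proj (indicator {\<one>}) = (\<lambda>g. 0)"
  have "twisted_shift g (\<lambda>g. 0) = (\<lambda>g. 0)" for g by (simp add: twisted_shift_def fun_eq_iff)
  then have "proj n g = 0" if "g \<in> carrier G" for g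
    using proj_apply[OF subsetD[OF subset_l2 \<open>n \<in> N\<close>] that] by (simp add: p l2_inner_def)
  then have "n = (\<lambda>g. 0)"
    using proj_fixed[OF \<open>n \<in> N\<close>] l2_vanishes[OF subsetD[OF subset_l2 \<open>n \<in> N\<close>]] by metis
  with \<open>n \<noteq> (\<lambda>g. 0)\<close> show False ..
qed

lemma analysis_op_synthesis_proj:
  assumes riesz: "riesz_vector G \<pi> \<eta>"
    and x: "x = (\<Sum>\<^sub>\<infinity>k\<in>carrier G. proj (indicator {\<one>}) k *\<^sub>C \<pi> k \<eta>)" and "x \<noteq> 0"
  shows "analysis_op G \<pi> x y = (\<lambda>g. cnj (\<mu> \<one> \<one>) * proj (analysis_op G \<pi> \<eta> y) g)"
proof
  fix g
  have a: "analysis_op G \<pi> \<eta> y \<in> l2 G" by (rule analysis_op_l2_if_riesz[OF riesz])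
  show "analysis_op G \<pi> x y g = cnj (\<mu> \<one> \<one>) * proj (analysis_op G \<pi> \<eta> y) g"
  proof (cases "g \<in> carrier G")
    case g: True
    have "analysis_op G \<pi> x y g = l2_inner G (analysis_op G \<pi> \<eta> y) (twisted_shift g (proj (indicator {\<one>})))"
      using cinner_synthesis[OF riesz proj_l2[OF l2_indicator[OF one_closed]] g, of y] g x
      by (simp add: analysis_op_def)
    also have "\<dots> = cnj (\<mu> g \<one>) * proj (analysis_op G \<pi> \<eta> y) g"
      using proj_apply[OF a g] cnj_multiplier_mult[OF g one_closed] by (simp add: mult.assoc[symmetric])
    finally show ?thesis using multiplier_right_one[OF \<open>x \<noteq> 0\<close> g] by simp
  next
    case False
    then show ?thesis using l2_vanishes[OF proj_l2[OF a] False] by (simp add: analysis_op_def)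
  qed
qed

end

context projective_rep
begin

theorem orthogonal_analysis_range_exists:
  assumes riesz: "riesz_vector G \<pi> \<eta>" and not_dense: "\<not> l2_dense G (analysis_range G \<pi> \<xi>)"
  shows "\<exists>x. x \<noteq> 0 \<and> (\<forall>a\<in>analysis_range G \<pi> x. \<forall>b\<in>analysis_range G \<pi> \<xi>. l2_inner G a b = 0)"
proof -
  define M where "M = analysis_range G \<pi> \<xi>"
  have M: "l2_subspace G M" unfolding M_def by (rule l2_subspace_analysis_range)
  note M_l2 = l2_subspaceD(1)[OF M]
  interpret N: twisted_invariant_subspace G \<pi> \<mu> "l2_orth G M"
  proof unfold_locales
    show "l2_subspace G (l2_orth G M)" by (rule l2_subspace_orth[OF M_l2])
    show "l2_closed G (l2_orth G M)" by (rule l2_closed_orth[OF M_l2])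
    fix h n assume "h \<in> carrier G" "n \<in> l2_orth G M"
    then show "twisted_shift h n \<in> l2_orth G M" "twisted_shift_adj h n \<in> l2_orth G M"
      by (auto intro!: l2_orth_twisted_shift l2_orth_twisted_shift_adj
          analysis_range_twisted_shift analysis_range_twisted_shift_adj simp: M_def)
  qed
  obtain n where "n \<in> l2_orth G M" "n \<noteq> (\<lambda>g. 0)"
    using l2_orth_nonzero_if_not_dense[OF M not_dense[folded M_def]] by blast
  then have p: "N.proj (indicator {\<one>}) \<noteq> (\<lambda>g. 0)" by (rule N.proj_indicator_nonzero)
  define x where "x = (\<Sum>\<^sub>\<infinity>k\<in>carrier G. N.proj (indicator {\<one>}) k *\<^sub>C \<pi> k \<eta>)"
  have "x \<noteq> 0"
    unfolding x_def by (rule synthesis_nonzero_if_riesz[OF riesz N.proj_l2[OF l2_indicator] p]) simp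
  have "analysis_op G \<pi> x y \<in> l2_orth G M" for y
    unfolding N.analysis_op_synthesis_proj[OF riesz x_def \<open>x \<noteq> 0\<close>]
    by (intro l2_subspaceD(4)[OF N.subspace] N.proj_in analysis_op_l2_if_riesz[OF riesz])
  then have "\<forall>a\<in>analysis_range G \<pi> x. \<forall>b\<in>M. l2_inner G a b = 0"
    by (auto simp: analysis_range_def l2_orth_def)
  with \<open>x \<noteq> 0\<close> show ?thesis unfolding M_def by blast
qed

end

theorem lemma3p9:
  fixes G :: "('g, 'b) monoid_scheme"
    and \<pi> :: "'g \<Rightarrow> 'h::{complex_inner, complete_space} \<Rightarrow> 'h"
    and \<xi> :: 'h
  assumes "group G"
    and "countable (carrier G)"
    and "proj_unitary_rep G \<pi>"
    and "closure {v. bessel_vector G \<pi> v} = UNIV"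
    and "\<exists>\<eta>. riesz_vector G \<pi> \<eta>"
    and "\<not> l2_dense G (analysis_range G \<pi> \<xi>)"
  shows "\<exists>x. x \<noteq> 0 \<and>
    (\<forall>a\<in>analysis_range G \<pi> x. \<forall>b\<in>analysis_range G \<pi> \<xi>. l2_inner G a b = 0)"
proof -
  obtain \<mu> where "projective_rep G \<pi> \<mu>"
    using assms(1,3) unfolding proj_unitary_rep_def projective_rep_def projective_rep_axioms_def
    by blast
  moreover obtain \<eta> where "riesz_vector G \<pi> \<eta>" using assms(5) by blast
  ultimately show ?thesis
    using projective_rep.orthogonal_analysis_range_exists assms(6) by blast
qed

end
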